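(* The map induced on associated graded objects \[ E^0\kappa\colon E^0(A/\!/E(1))_*\to(A/\!/E(2))_*\otimes E(\overline{\tau}_2) \] is an isomorphism of $E(2)_*$-comodule algebras.
   Context: Let $p$ be an odd prime. In the mod $p$ dual Steenrod algebra let $\zeta_n,\overline{\tau}_n$ be the conjugates of Milnor's $\xi_n,\tau_n$. Let $(A/\!/E(1))_*=\mathbb{F}_p[\zeta_1,\zeta_2,\ldots]\otimes E(\overline{\tau}_2,\overline{\tau}_3,\ldots)$ and $(A/\!/E(2))_*=\mathbb{F}_p[\zeta_1,\ldots]\otimes E(\overline{\tau}_3,\ldots)$; they are comodule algebras over $E(2)_*=E(\overline{\tau}_0,\overline{\tau}_1,\overline{\tau}_2)$ (primitive generators) with $\alpha(\zeta_k)=1\otimes\zeta_k$ and $\alpha(\overline{\tau}_n)=1\otimes\overline{\tau}_n+\sum_{l=0}^{2}\overline{\tau}_l\otimes\zeta_{n-l}^{p^l}$ ($\zeta_0=1$). $E(\overline{\tau}_2)=(E(2)/\!/E(1))_*$ with $\overline{\tau}_2$ primitive, and $(A/\!/E(2))_*\otimes E(\overline{\tau}_2)$ has the diagonal coaction. Let $\kappa\colon(A/\!/E(1))_*\to(A/\!/E(2))_*\otimes E(\overline{\tau}_2)$ be the linear isomorphism $m\overline{\tau}_2^\epsilon\mapsto m\otimes\overline{\tau}_2^\epsilon$ ($m$ a monomial in $(A/\!/E(2))_*$, $\epsilon\in\{0,1\}$); it is not a comodule map. Weight: $\mathrm{wt}(\zeta_k)=\mathrm{wt}(\overline{\tau}_k)=p^k$,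 additive; $M_2(k)$ is the span of monomials of $(A/\!/E(2))_*$ of weight $pk$, and $F^j(A/\!/E(1))_*=\kappa^{-1}(\bigoplus_{k\ge j}M_2(k)\otimes E(\overline{\tau}_2))$, a decreasing multiplicative filtration by $E(2)_*$-subcomodules, with associated graded $E^0(A/\!/E(1))_*=\bigoplus_jF^j/F^{j+1}$; $E^0\kappa$ is the map induced by $\kappa$. *)

theory Defs
  imports Main "HOL-Library.Poly_Mapping" "HOL-Computational_Algebra.Primes"
begin

section \<open>Monomials of the (conjugate) dual Steenrod algebra\<close>

text \<open>A monomial zeta^a tau_S is encoded as (a, S): a finitely supported exponent
vector a (Poly_Mapping.lookup a k = exponent of zeta_k, k >= 1) and a finite set S of indices of the
exterior generators tau-bar_n; tau_S means the product tau_{s1} ... tau_{sm} with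
s1 < ... < sm.  Vectors over the field are finitely supported functions on a basis.\<close>

type_synonym mono = "(nat \<Rightarrow>\<^sub>0 nat) \<times> nat set"

definition sc :: "'k::comm_ring_1 \<Rightarrow> ('b \<Rightarrow>\<^sub>0 'k) \<Rightarrow> ('b \<Rightarrow>\<^sub>0 'k)" where
  "sc c v = Poly_Mapping.map (\<lambda>x. c * x) v"

definition lin :: "('b \<Rightarrow> ('c \<Rightarrow>\<^sub>0 'k::comm_ring_1)) \<Rightarrow> ('b \<Rightarrow>\<^sub>0 'k) \<Rightarrow> ('c \<Rightarrow>\<^sub>0 'k)" where
  "lin f v = (\<Sum>b\<in>Poly_Mapping.keys v. sc (Poly_Mapping.lookup v b) (f b))"

definition bilin :: "('a \<Rightarrow> 'b \<Rightarrow> ('c \<Rightarrow>\<^sub>0 'k::comm_ring_1))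
     \<Rightarrow> ('a \<Rightarrow>\<^sub>0 'k) \<Rightarrow> ('b \<Rightarrow>\<^sub>0 'k) \<Rightarrow> ('c \<Rightarrow>\<^sub>0 'k)" where
  "bilin f u v = (\<Sum>a\<in>Poly_Mapping.keys u. \<Sum>b\<in>Poly_Mapping.keys v. sc (Poly_Mapping.lookup u a * Poly_Mapping.lookup v b) (f a b))"

definition inv_count :: "nat set \<Rightarrow> nat set \<Rightarrow> nat" where
  "inv_count S T = card {(s,t). s \<in> S \<and> t \<in> T \<and> t < s}"

text \<open>Product of monomials (graded commutative: zeta's even, tau's odd).\<close>
definition mmul :: "mono \<Rightarrow> mono \<Rightarrow> (mono \<Rightarrow>\<^sub>0 'k::comm_ring_1)" where
  "mmul m n = (if snd m \<inter> snd n = {}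
      then Poly_Mapping.single (fst m + fst n, snd m \<union> snd n) ((-1) ^ inv_count (snd m) (snd n))
      else 0)"

definition vmul :: "(mono \<Rightarrow>\<^sub>0 'k::comm_ring_1) \<Rightarrow> (mono \<Rightarrow>\<^sub>0 'k) \<Rightarrow> (mono \<Rightarrow>\<^sub>0 'k)" where
  "vmul = bilin mmul"

definition vone :: "mono \<Rightarrow>\<^sub>0 'k::comm_ring_1" where
  "vone = Poly_Mapping.single (0, {}) 1"

text \<open>Parity of the degree of a monomial = number of tau's.\<close>
definition par :: "mono \<Rightarrow> nat" where "par m = card (snd m)"

text \<open>Tensor of two vectors, and the graded (Koszul) tensor product algebra structure:
(u (x) v)(u' (x) v') = (-1)^(|v||u'|) uu' (x) vv'.\<close>
definition tens :: "('a \<Rightarrow>\<^sub>0 'k::comm_ring_1) \<Rightarrow> ('b \<Rightarrow>\<^sub>0 'k) \<Rightarrow> (('a \<times> 'b) \<Rightarrow>\<^sub>0 'k)" where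
  "tens x y = bilin (\<lambda>a b. Poly_Mapping.single (a, b) 1) x y"

definition tbas :: "mono \<times> mono \<Rightarrow> mono \<times> mono \<Rightarrow> ((mono \<times> mono) \<Rightarrow>\<^sub>0 'k::comm_ring_1)" where
  "tbas uv uv' = sc ((-1) ^ (par (snd uv) * par (fst uv')))
                    (tens (mmul (fst uv) (fst uv')) (mmul (snd uv) (snd uv')))"

definition tmul :: "((mono \<times> mono) \<Rightarrow>\<^sub>0 'k::comm_ring_1) \<Rightarrow> ((mono \<times> mono) \<Rightarrow>\<^sub>0 'k)
     \<Rightarrow> ((mono \<times> mono) \<Rightarrow>\<^sub>0 'k)" where
  "tmul = bilin tbas"

definition tau :: "nat \<Rightarrow> mono" where "tau n = (0, {n})"

text \<open>zeta_k^e, with zeta_0 = 1.\<close>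
definition zpow :: "nat \<Rightarrow> nat \<Rightarrow> mono" where
  "zpow k e = (if k = 0 then (0, {}) else (Poly_Mapping.single k e, {}))"

section \<open>The E(2)_*-coaction\<close>

text \<open>Elements of E(2)_* (x) V are encoded in (mono x basis(V)) =>0 k, the left monomial
being tau_S with S a subset of {0,1,2}.\<close>

definition alpha_tau :: "nat \<Rightarrow> nat \<Rightarrow> ((mono \<times> mono) \<Rightarrow>\<^sub>0 'k::comm_ring_1)" where
  "alpha_tau p n = Poly_Mapping.single ((0, {}), tau n) 1
      + (\<Sum>l\<le>2. Poly_Mapping.single (tau l, zpow (n - l) (p ^ l)) 1)"

text \<open>alpha is multiplicative: alpha(zeta^a tau_s1 ... tau_sm)
 = (1 (x) zeta^a) alpha(tau_s1) ... alpha(tau_sm).\<close>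
definition alpha_mono :: "nat \<Rightarrow> mono \<Rightarrow> ((mono \<times> mono) \<Rightarrow>\<^sub>0 'k::comm_ring_1)" where
  "alpha_mono p m = foldl (\<lambda>acc n. tmul acc (alpha_tau p n))
      (Poly_Mapping.single ((0, {}), (fst m, {})) 1) (sorted_list_of_set (snd m))"

definition alpha :: "nat \<Rightarrow> (mono \<Rightarrow>\<^sub>0 'k::comm_ring_1) \<Rightarrow> ((mono \<times> mono) \<Rightarrow>\<^sub>0 'k)" where
  "alpha p = lin (alpha_mono p)"

text \<open>Coefficient of tau_S (S subset of {0,1,2}) in an element of E(2)_* (x) V.\<close>
definition comp :: "nat set \<Rightarrow> ((mono \<times> 'b) \<Rightarrow>\<^sub>0 'k::comm_ring_1) \<Rightarrow> ('b \<Rightarrow>\<^sub>0 'k)" where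
  "comp S w = lin (\<lambda>ey. if fst ey = (0, S) then Poly_Mapping.single (snd ey) 1 else 0) w"

definition mAE1 :: "mono \<Rightarrow> bool" where
  "mAE1 m \<longleftrightarrow> 0 \<notin> Poly_Mapping.keys (fst m) \<and> finite (snd m) \<and> snd m \<subseteq> {2..}"

definition mAE2 :: "mono \<Rightarrow> bool" where
  "mAE2 m \<longleftrightarrow> 0 \<notin> Poly_Mapping.keys (fst m) \<and> finite (snd m) \<and> snd m \<subseteq> {3..}"

definition AE1 :: "(mono \<Rightarrow>\<^sub>0 'k::comm_ring_1) set" where
  "AE1 = {x. \<forall>m\<in>Poly_Mapping.keys x. mAE1 m}"

text \<open>(A//E(2))_* (x) E(tau_2), basis pairs (m, t) with t = 1 or tau_2.\<close>
definition TT :: "((mono \<times> mono) \<Rightarrow>\<^sub>0 'k::comm_ring_1) set" where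
  "TT = {y. \<forall>mt\<in>Poly_Mapping.keys y. mAE2 (fst mt) \<and> snd mt \<in> {(0, {}), tau 2}}"

definition TTone :: "(mono \<times> mono) \<Rightarrow>\<^sub>0 'k::comm_ring_1" where
  "TTone = Poly_Mapping.single ((0, {}), (0, {})) 1"

text \<open>Coaction on E(tau_2): tau_2 primitive.\<close>
definition alphaE :: "mono \<Rightarrow> ((mono \<times> mono) \<Rightarrow>\<^sub>0 'k::comm_ring_1)" where
  "alphaE t = Poly_Mapping.single ((0, {}), t) 1
     + (if t = tau 2 then Poly_Mapping.single (tau 2, (0, {})) 1 else 0)"

text \<open>Diagonal coaction on (A//E(2))_* (x) E(tau_2):
alpha(m (x) t) = sum (-1)^(|m''||t'|) m't' (x) (m'' (x) t'').\<close>
definition alphaT_bas :: "nat \<Rightarrow> mono \<times> mono \<Rightarrow> ((mono \<times> (mono \<times> mono)) \<Rightarrow>\<^sub>0 'k::comm_ring_1)" where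
  "alphaT_bas p mt = bilin
      (\<lambda>em et. sc ((-1) ^ (par (snd em) * par (fst et)))
          (lin (\<lambda>e. Poly_Mapping.single (e, (snd em, snd et)) 1) (mmul (fst em) (fst et))))
      (alpha p (Poly_Mapping.single (fst mt) 1)) (alphaE (snd mt))"

definition alphaT :: "nat \<Rightarrow> ((mono \<times> mono) \<Rightarrow>\<^sub>0 'k::comm_ring_1)
     \<Rightarrow> ((mono \<times> (mono \<times> mono)) \<Rightarrow>\<^sub>0 'k)" where
  "alphaT p = lin (alphaT_bas p)"

text \<open>kappa(m tau_2^eps) = m (x) tau_2^eps.  For a basis monomial (a,T) with 2 in T one has
(a,T) = (-1)^inv_count (T-{2}) {2} * (a,T-{2}) tau_2 (the sign is its own inverse).\<close>
definition kappa_mono :: "mono \<Rightarrow> ((mono \<times> mono) \<Rightarrow>\<^sub>0 'k::comm_ring_1)" where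
  "kappa_mono m = (if 2 \<in> snd m
      then Poly_Mapping.single ((fst m, snd m - {2}), tau 2) ((-1) ^ inv_count (snd m - {2}) {2})
      else Poly_Mapping.single (m, (0, {})) 1)"

definition kappa :: "(mono \<Rightarrow>\<^sub>0 'k::comm_ring_1) \<Rightarrow> ((mono \<times> mono) \<Rightarrow>\<^sub>0 'k)" where
  "kappa = lin kappa_mono"

definition wt :: "nat \<Rightarrow> mono \<Rightarrow> nat" where
  "wt p m = (\<Sum>k\<in>Poly_Mapping.keys (fst m). Poly_Mapping.lookup (fst m) k * p ^ k) + (\<Sum>s\<in>snd m. p ^ s)"

text \<open>(+)_{k >= j} M_2(k) (x) E(tau_2)\<close>
definition TF :: "nat \<Rightarrow> nat \<Rightarrow> ((mono \<times> mono) \<Rightarrow>\<^sub>0 'k::comm_ring_1) set" where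
  "TF p j = {y \<in> TT. \<forall>mt\<in>Poly_Mapping.keys y. \<exists>k\<ge>j. wt p (fst mt) = p * k}"

definition Fil :: "nat \<Rightarrow> nat \<Rightarrow> (mono \<Rightarrow>\<^sub>0 'k::comm_ring_1) set" where
  "Fil p j = {x \<in> AE1. kappa x \<in> TF p j}"

section \<open>Associated graded E^0 = (+)_j F^j / F^(j+1)\<close>

definition rel :: "nat \<Rightarrow> nat \<Rightarrow> ((mono \<Rightarrow>\<^sub>0 'k::comm_ring_1) \<times> (mono \<Rightarrow>\<^sub>0 'k)) set" where
  "rel p j = {(x, y). x \<in> Fil p j \<and> y \<in> Fil p j \<and> x - y \<in> Fil p (Suc j)}"

definition Gr :: "nat \<Rightarrow> nat \<Rightarrow> (mono \<Rightarrow>\<^sub>0 'k::comm_ring_1) set set" where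
  "Gr p j = Fil p j // rel p j"

definition cls :: "nat \<Rightarrow> nat \<Rightarrow> (mono \<Rightarrow>\<^sub>0 'k::comm_ring_1) \<Rightarrow> (mono \<Rightarrow>\<^sub>0 'k) set" where
  "cls p j x = rel p j `` {x}"

definition rep :: "'a set \<Rightarrow> 'a" where "rep X = (SOME x. x \<in> X)"

text \<open>An element of E^0 is a family of classes, almost all zero.\<close>
definition E0 :: "nat \<Rightarrow> (nat \<Rightarrow> (mono \<Rightarrow>\<^sub>0 'k::comm_ring_1) set) set" where
  "E0 p = {f. (\<forall>j. f j \<in> Gr p j) \<and> finite {j. f j \<noteq> cls p j 0}}"

definition E0add where
  "E0add p f g = (\<lambda>j. cls p j (rep (f j) + rep (g j)))"

definition E0smul where
  "E0smul p c f = (\<lambda>j. cls p j (sc c (rep (f j))))"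

definition E0mul where
  "E0mul p f g = (\<lambda>n. cls p n (\<Sum>i\<le>n. vmul (rep (f i)) (rep (g (n - i)))))"

definition E0one where
  "E0one p = (\<lambda>j. cls p j (if j = 0 then vone else 0))"

text \<open>Induced coaction E^0 -> E(2)_* (x) E^0, the latter encoded as functions
S |-> (coefficient of tau_S) in E^0.\<close>
definition E0coact where
  "E0coact p f = (\<lambda>S j. cls p j (comp S (alpha p (rep (f j)))))"

definition prj :: "nat \<Rightarrow> nat \<Rightarrow> ((mono \<times> mono) \<Rightarrow>\<^sub>0 'k::comm_ring_1) \<Rightarrow> ((mono \<times> mono) \<Rightarrow>\<^sub>0 'k)" where
  "prj p j = lin (\<lambda>mt. if wt p (fst mt) = p * j then Poly_Mapping.single mt 1 else 0)"

definition E0kappa :: "nat \<Rightarrow> (nat \<Rightarrow> (mono \<Rightarrow>\<^sub>0 'k::comm_ring_1) set) \<Rightarrow> ((mono \<times> mono) \<Rightarrow>\<^sub>0 'k)" where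
  "E0kappa p f = (\<Sum>j\<in>{j. f j \<noteq> cls p j 0}. prj p j (kappa (rep (f j))))"

end

theory Submission
  imports Defs
begin

text \<open>Up to Koszul signs, \<open>\<kappa>\<close> is a bijection between the monomial bases, and it is
  multiplicative because \<open>\<tau>\<^sub>2\<close> is moved past the other odd generators in the same way on
  both sides. The weight of the \<open>(A//E(2))\<^sub>*\<close>-factor, which ignores \<open>\<tau>\<^sub>2\<close>, is additive
  and divisible by \<open>p\<close>, so \<open>F\<^sup>j/F\<^sup>j\<^sup>+\<^sup>1\<close> is spanned by the monomials of weight exactly
  \<open>p j\<close>, and \<open>E\<^sup>0\<kappa>\<close> is an isomorphism of algebras. For the coaction, \<open>\<alpha>(\<zeta>\<^sub>k)\<close> and
  \<open>\<alpha>(\<tau>\<^sub>n)\<close>, \<open>n \<ge> 3\<close>, only involve terms whose right factor has the weight of the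
  generator, whereas in \<open>\<alpha>(\<tau>\<^sub>2) = 1 \<otimes> \<tau>\<^sub>2 + \<tau>\<^sub>0 \<otimes> \<zeta>\<^sub>2 + \<tau>\<^sub>1 \<otimes> \<zeta>\<^sub>1\<^sup>p + \<tau>\<^sub>2 \<otimes> 1\<close>
  the two middle terms lie in higher filtration. Modulo \<open>F\<^sup>j\<^sup>+\<^sup>1\<close> the generator \<open>\<tau>\<^sub>2\<close>
  is therefore primitive, which is the diagonal coaction on \<open>(A//E(2))\<^sub>* \<otimes> E(\<tau>\<^sub>2)\<close>.\<close>

abbreviation lookup :: "('a \<Rightarrow>\<^sub>0 'b::zero) \<Rightarrow> 'a \<Rightarrow> 'b" where
  "lookup \<equiv> Poly_Mapping.lookup"
abbreviation keys :: "('a \<Rightarrow>\<^sub>0 'b::zero) \<Rightarrow> 'a set" where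
  "keys \<equiv> Poly_Mapping.keys"
abbreviation single :: "'a \<Rightarrow> 'b \<Rightarrow> ('a \<Rightarrow>\<^sub>0 'b::zero)" where
  "single \<equiv> Poly_Mapping.single"

lemma lookup_sc [simp]: "lookup (sc c v) b = c * lookup v b"
  unfolding sc_def by transfer (auto simp: when_def)

lemma sc_zero_left [simp]: "sc 0 v = 0"
  by (rule poly_mapping_eqI) simp

lemma sc_zero_right [simp]: "sc c 0 = 0"
  by (rule poly_mapping_eqI) simp

lemma sc_one [simp]: "sc 1 v = v"
  by (rule poly_mapping_eqI) simp

lemma sc_sc [simp]: "sc c (sc d v) = sc (c * d) v"
  by (rule poly_mapping_eqI) (simp add: mult.assoc)

lemma sc_single [simp]: "sc c (single b d) = single b (c * d)"
  by (rule poly_mapping_eqI) (simp add: lookup_single when_def)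

lemma sc_add_left: "sc (c + d) v = sc c v + sc d v"
  by (rule poly_mapping_eqI) (simp add: lookup_add algebra_simps)

lemma sc_uminus_left: "sc (- c) v = - sc c v"
  by (rule poly_mapping_eqI) simp

lemma sc_sum: "sc c (sum g A) = (\<Sum>x\<in>A. sc c (g x))"
  by (rule poly_mapping_eqI) (simp add: lookup_sum sum_distrib_left)

lemma keys_sc: "keys (sc c v) \<subseteq> keys v"
  by (auto simp: in_keys_iff)

lemma lin_eq_sum_superset:
  assumes "finite A" "keys v \<subseteq> A"
  shows "lin f v = (\<Sum>b\<in>A. sc (lookup v b) (f b))"
  unfolding lin_def
  by (rule sum.mono_neutral_left) (use assms in \<open>auto simp: in_keys_iff\<close>)

lemma lin_add: "lin f (v + w) = lin f v + lin f w"
proof -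
  let ?A = "keys v \<union> keys w"
  have "lin f (v + w) = (\<Sum>b\<in>?A. sc (lookup (v + w) b) (f b))"
    using keys_add[of v w] by (intro lin_eq_sum_superset) auto
  also have "\<dots> = (\<Sum>b\<in>?A. sc (lookup v b) (f b)) + (\<Sum>b\<in>?A. sc (lookup w b) (f b))"
    by (simp add: lookup_add sc_add_left sum.distrib)
  also have "\<dots> = lin f v + lin f w"
    by (subst (1 2) lin_eq_sum_superset[where A = ?A]) auto
  finally show ?thesis .
qed

lemma lin_sc: "lin f (sc c v) = sc c (lin f v)"
proof -
  have "lin f (sc c v) = (\<Sum>b\<in>keys v. sc (lookup (sc c v) b) (f b))"
    by (intro lin_eq_sum_superset) (auto simp: keys_sc)
  then show ?thesis by (simp add: lin_def sc_sum)
qed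

lemma lin_zero [simp]: "lin f 0 = 0"
  by (simp add: lin_def)

lemma lin_single [simp]: "lin f (single b c) = sc c (f b)"
  using lin_eq_sum_superset[of "{b}" "single b c" f] by simp

lemma lin_uminus: "lin f (- v) = - lin f v"
  using lin_sc[of f "- 1" v] by (simp add: sc_uminus_left)

lemma lin_diff: "lin f (v - w) = lin f v - lin f w"
  by (metis diff_conv_add_uminus lin_add lin_uminus)

lemma lin_sum: "lin f (sum g A) = (\<Sum>x\<in>A. lin f (g x))"
  by (induction A rule: infinite_finite_induct) (auto simp: lin_add)

lemma lin_cong: "(\<And>b. b \<in> keys v \<Longrightarrow> f b = g b) \<Longrightarrow> lin f v = lin g v"
  by (simp add: lin_def)

lemma lookup_lin: "lookup (lin f v) c = (\<Sum>b\<in>keys v. lookup v b * lookup (f b) c)"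
  by (simp add: lin_def lookup_sum)

lemma lin_lin: "lin g (lin f v) = lin (\<lambda>b. lin g (f b)) v"
  unfolding lin_def[of f] by (simp add: lin_sum lin_sc) (simp add: lin_def)

lemma lin_sc_fun: "lin (\<lambda>b. sc c (f b)) v = sc c (lin f v)"
  by (simp add: lin_def sc_sum mult.commute)

lemma lin_uminus_fun: "lin (\<lambda>b. - f b) v = - lin f v"
  using lin_sc_fun[of "- 1" f v] by (simp add: sc_uminus_left)

lemma lookup_lin_single_if:
  "lookup (lin (\<lambda>b. if P b then single b 1 else 0) v) c = (if P c then lookup v c else 0)"
proof -
  have "lookup (lin (\<lambda>b. if P b then single b 1 else 0) v) c
      = (\<Sum>b\<in>keys v. lookup v b * (if b = c \<and> P c then 1 else 0))"
    unfolding lookup_lin by (intro sum.cong refl) (auto simp: lookup_single when_def)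
  also have "\<dots> = (if P c then lookup v c else 0)"
    by (cases "c \<in> keys v") (auto simp: if_distrib in_keys_iff cong: if_cong)
  finally show ?thesis .
qed

lemma keys_lin: "keys (lin f v) \<subseteq> (\<Union>b\<in>keys v. keys (f b))"
proof
  fix c assume "c \<in> keys (lin f v)"
  then have "(\<Sum>b\<in>keys v. lookup v b * lookup (f b) c) \<noteq> 0"
    by (simp add: in_keys_iff lookup_lin)
  then obtain b where "b \<in> keys v" "lookup (f b) c \<noteq> 0"
    by (metis (no_types, lifting) mult_zero_right sum.neutral)
  then show "c \<in> (\<Union>b\<in>keys v. keys (f b))" by (auto simp: in_keys_iff)
qed

lemma bilin_eq_lin_left: "bilin f u v = lin (\<lambda>a. lin (f a) v) u"
  by (simp add: bilin_def lin_def sc_sum mult.commute)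

lemma bilin_eq_lin_right: "bilin f u v = lin (\<lambda>b. lin (\<lambda>a. f a b) u) v"
  by (simp add: bilin_def lin_def sc_sum mult.commute sum.swap[of _ "keys u"])

lemma bilin_sc_left: "bilin f (sc c u) v = sc c (bilin f u v)"
  by (simp add: bilin_eq_lin_left lin_sc)

lemma bilin_sum_left: "bilin f (sum g A) v = (\<Sum>x\<in>A. bilin f (g x) v)"
  by (simp add: bilin_eq_lin_left lin_sum)

lemma bilin_sum_right: "bilin f u (sum g A) = (\<Sum>x\<in>A. bilin f u (g x))"
  by (simp add: bilin_eq_lin_right lin_sum)

lemma bilin_uminus_right: "bilin f u (- v) = - bilin f u v"
  by (simp add: bilin_eq_lin_right lin_uminus)

lemma bilin_zero_left [simp]: "bilin f 0 v = 0"
  by (simp add: bilin_def)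

lemma bilin_zero_right [simp]: "bilin f u 0 = 0"
  by (simp add: bilin_def)

lemma bilin_single [simp]: "bilin f (single a c) (single b d) = sc (c * d) (f a b)"
  by (simp add: bilin_eq_lin_left lin_sc)

lemma bilin_single_right: "bilin f u (single b d) = sc d (lin (\<lambda>a. f a b) u)"
  by (simp add: bilin_eq_lin_right)

lemma bilin_cong:
  "(\<And>a b. a \<in> keys u \<Longrightarrow> b \<in> keys v \<Longrightarrow> f a b = g a b) \<Longrightarrow> bilin f u v = bilin g u v"
  by (simp add: bilin_def)

lemma lin_bilin: "lin h (bilin f u v) = bilin (\<lambda>a b. lin h (f a b)) u v"
  by (simp add: bilin_eq_lin_left lin_lin)

lemma bilin_lin_left: "bilin f (lin g u) w = lin (\<lambda>a. bilin f (g a) w) u"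
  by (simp add: bilin_eq_lin_left lin_lin)

lemma bilin_lin_right: "bilin f w (lin h v) = lin (\<lambda>b. bilin f w (h b)) v"
  by (simp add: bilin_eq_lin_right lin_lin)

lemma bilin_lin_lin: "bilin f (lin g u) (lin h v) = bilin (\<lambda>a b. bilin f (g a) (h b)) u v"
proof -
  have "bilin f (lin g u) (lin h v) = lin (\<lambda>a. bilin f (g a) (lin h v)) u"
    by (rule bilin_lin_left)
  also have "\<dots> = lin (\<lambda>a. lin (\<lambda>b. bilin f (g a) (h b)) v) u"
    by (simp only: bilin_lin_right)
  also have "\<dots> = bilin (\<lambda>a b. bilin f (g a) (h b)) u v"
    by (rule bilin_eq_lin_left[symmetric])
  finally show ?thesis .
qed

lemma keys_bilin:
  "keys (bilin f u v) \<subseteq> (\<Union>a\<in>keys u. \<Union>b\<in>keys v. keys (f a b))"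
proof
  fix c assume "c \<in> keys (bilin f u v)"
  then obtain a where a: "a \<in> keys u" "c \<in> keys (lin (f a) v)"
    using keys_lin[of "\<lambda>a. lin (f a) v" u] unfolding bilin_eq_lin_left by blast
  then obtain b where "b \<in> keys v" "c \<in> keys (f a b)"
    using keys_lin[of "f a" v] by blast
  with a(1) show "c \<in> (\<Union>a\<in>keys u. \<Union>b\<in>keys v. keys (f a b))" by blast
qed

section \<open>Koszul signs\<close>

lemma inv_count_empty_left [simp]: "inv_count {} B = 0"
  by (simp add: inv_count_def)

lemma inv_count_empty_right [simp]: "inv_count A {} = 0"
  by (simp add: inv_count_def)

lemma finite_inversions:
  "finite A \<Longrightarrow> finite B \<Longrightarrow> finite {(s, t). s \<in> A \<and> t \<in> B \<and> t < s}"
  by (rule finite_subset[of _ "A \<times> B"]) auto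

lemma inv_count_Un_left:
  assumes "finite A" "finite B" "finite C" "A \<inter> B = {}"
  shows "inv_count (A \<union> B) C = inv_count A C + inv_count B C"
proof -
  have "{(s, t). s \<in> A \<union> B \<and> t \<in> C \<and> t < s}
      = {(s, t). s \<in> A \<and> t \<in> C \<and> t < s} \<union> {(s, t). s \<in> B \<and> t \<in> C \<and> t < s}"
    by auto
  then show ?thesis
    unfolding inv_count_def using assms
    by (subst card_Un_disjoint[symmetric]) (auto simp: finite_inversions)
qed

lemma inv_count_Un_right:
  assumes "finite A" "finite B" "finite C" "B \<inter> C = {}"
  shows "inv_count A (B \<union> C) = inv_count A B + inv_count A C"
proof -
  have "{(s, t). s \<in> A \<and> t \<in> B \<union> C \<and> t < s}
      = {(s, t). s \<in> A \<and> t \<in> B \<and> t < s} \<union> {(s, t). s \<in> A \<and> t \<in> C \<and> t < s}"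
    by auto
  then show ?thesis
    unfolding inv_count_def using assms
    by (subst card_Un_disjoint[symmetric]) (auto simp: finite_inversions)
qed

lemma inv_count_swap:
  assumes "finite A" "finite B" "A \<inter> B = {}"
  shows "inv_count A B + inv_count B A = card A * card B"
proof -
  let ?X = "{(s, t). s \<in> A \<and> t \<in> B \<and> t < s}"
  let ?Y = "{(s, t). s \<in> A \<and> t \<in> B \<and> s < t}"
  let ?Y' = "{(s, t). s \<in> B \<and> t \<in> A \<and> t < s}"
  have "?Y = (\<lambda>(a, b). (b, a)) ` ?Y'" by auto
  moreover have "inj_on (\<lambda>(a, b). (b, a)) ?Y'" by (auto simp: inj_on_def)
  ultimately have Y: "card ?Y = inv_count B A" by (simp add: inv_count_def card_image)
  have XY: "A \<times> B = ?X \<union> ?Y" using assms by auto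
  have "finite ?X" using assms(1,2) by (rule finite_inversions)
  moreover have "finite ?Y" by (rule finite_subset[of _ "A \<times> B"]) (use assms in auto)
  moreover have "?X \<inter> ?Y = {}" by auto
  ultimately have "card (A \<times> B) = card ?X + card ?Y"
    unfolding XY by (rule card_Un_disjoint)
  then show ?thesis using Y by (simp add: inv_count_def card_cartesian_product)
qed

lemma inv_count_eq_0: "(\<And>s t. s \<in> A \<Longrightarrow> t \<in> B \<Longrightarrow> s \<le> t) \<Longrightarrow> inv_count A B = 0"
  unfolding inv_count_def by (rule card_eq_0_iff[THEN iffD2]) (auto dest: leD)

lemma inv_count_singleton_below:
  assumes "finite A" "\<And>s. s \<in> A \<Longrightarrow> b < s"
  shows "inv_count A {b} = card A"
proof -
  have "{(s, t). s \<in> A \<and> t \<in> {b} \<and> t < s} = (\<lambda>s. (s, b)) ` A" using assms by auto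
  then show ?thesis by (simp add: inv_count_def card_image inj_on_def)
qed

lemma neg_one_power_eq_if_even_add:
  "even (a + b) \<Longrightarrow> (- 1 :: 'a::comm_ring_1) ^ a = (- 1) ^ b"
  by (cases "even a") auto

section \<open>The graded tensor product of two monomial algebras\<close>

definition mono_add :: "mono \<Rightarrow> mono \<Rightarrow> mono" where
  "mono_add m n = (fst m + fst n, snd m \<union> snd n)"

lemma snd_mono_add [simp]: "snd (mono_add m n) = snd m \<union> snd n"
  by (simp add: mono_add_def)

lemma mmul_eq:
  "mmul m n = (if snd m \<inter> snd n = {}
     then single (mono_add m n) ((- 1) ^ inv_count (snd m) (snd n)) else 0)"
  by (simp add: mmul_def mono_add_def)

definition tdisjoint :: "mono \<times> mono \<Rightarrow> mono \<times> mono \<Rightarrow> bool" where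
  "tdisjoint u v \<longleftrightarrow> snd (fst u) \<inter> snd (fst v) = {} \<and> snd (snd u) \<inter> snd (snd v) = {}"

definition tmono_add :: "mono \<times> mono \<Rightarrow> mono \<times> mono \<Rightarrow> mono \<times> mono" where
  "tmono_add u v = (mono_add (fst u) (fst v), mono_add (snd u) (snd v))"

definition tsign :: "mono \<times> mono \<Rightarrow> mono \<times> mono \<Rightarrow> nat" where
  "tsign u v = par (snd u) * par (fst v)
     + inv_count (snd (fst u)) (snd (fst v)) + inv_count (snd (snd u)) (snd (snd v))"

definition tfinite :: "mono \<times> mono \<Rightarrow> bool" where
  "tfinite u \<longleftrightarrow> finite (snd (fst u)) \<and> finite (snd (snd u))"

definition tdeg :: "mono \<times> mono \<Rightarrow> nat" where
  "tdeg u = card (snd (fst u)) + card (snd (snd u))"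

lemma snd_tmono_add: "snd (tmono_add u v) = mono_add (snd u) (snd v)"
  by (simp add: tmono_add_def)

lemma tbas_eq: "tbas u v = (if tdisjoint u v then single (tmono_add u v) ((- 1) ^ tsign u v) else 0)"
  by (simp add: tbas_def mmul_eq tdisjoint_def tmono_add_def tsign_def tens_def power_add mult_ac)

lemma tfinite_tmono_add: "tfinite u \<Longrightarrow> tfinite v \<Longrightarrow> tfinite (tmono_add u v)"
  by (auto simp: tfinite_def tmono_add_def mono_add_def)

lemma tsign_assoc:
  assumes "tfinite u" "tfinite v" "tfinite w" "tdisjoint u v" "tdisjoint (tmono_add u v) w"
  shows "tsign u v + tsign (tmono_add u v) w = tsign v w + tsign u (tmono_add v w)"
proof -
  obtain e1 r1 e2 r2 e3 r3 where uvw: "u = (e1, r1)" "v = (e2, r2)" "w = (e3, r3)"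
    by (metis prod.exhaust)
  show ?thesis
    using assms unfolding uvw tfinite_def tdisjoint_def tsign_def tmono_add_def mono_add_def par_def
    by (simp add: inv_count_Un_left inv_count_Un_right card_Un_disjoint
        Int_Un_distrib Int_Un_distrib2 algebra_simps)
qed

lemma tbas_assoc:
  assumes "tfinite u" "tfinite v" "tfinite w"
  shows "lin (\<lambda>x. tbas x w) (tbas u v) = lin (tbas u) (tbas v w)"
proof -
  have disj: "(tdisjoint u v \<and> tdisjoint (tmono_add u v) w) \<longleftrightarrow>
      (tdisjoint v w \<and> tdisjoint u (tmono_add v w))"
    by (auto simp: tdisjoint_def tmono_add_def mono_add_def)
  have "tmono_add (tmono_add u v) w = tmono_add u (tmono_add v w)"
    by (simp add: tmono_add_def mono_add_def add.assoc Un_assoc)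
  then show ?thesis
    using disj tsign_assoc[OF assms] by (auto simp: tbas_eq simp flip: power_add)
qed

lemma tmul_eq_lin_left: "tmul X Y = lin (\<lambda>u. lin (tbas u) Y) X"
  by (simp add: tmul_def bilin_eq_lin_left)

lemma tmul_eq_lin_right: "tmul X Y = lin (\<lambda>v. lin (\<lambda>u. tbas u v) X) Y"
  by (simp add: tmul_def bilin_eq_lin_right)

lemma ball_keys_tmul:
  fixes X Y :: "(mono \<times> mono) \<Rightarrow>\<^sub>0 'k::comm_ring_1"
  assumes "\<And>u v. u \<in> keys X \<Longrightarrow> v \<in> keys Y \<Longrightarrow> tdisjoint u v \<Longrightarrow> P (tmono_add u v)"
  shows "\<forall>c\<in>keys (tmul X Y). P c"
proof
  fix c assume "c \<in> keys (tmul X Y)"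
  with keys_bilin[of tbas X Y]
  have "c \<in> (\<Union>u\<in>keys X. \<Union>v\<in>keys Y. keys (tbas u v :: _ \<Rightarrow>\<^sub>0 'k))"
    unfolding tmul_def by (rule subsetD)
  then obtain u v where uv: "u \<in> keys X" "v \<in> keys Y" "c \<in> keys (tbas u v :: _ \<Rightarrow>\<^sub>0 'k)"
    by blast
  then have "tdisjoint u v" "c = tmono_add u v"
    by (simp_all add: tbas_eq split: if_splits)
  with uv assms show "P c" by blast
qed

definition tfinite_keys :: "((mono \<times> mono) \<Rightarrow>\<^sub>0 'k::comm_ring_1) \<Rightarrow> bool" where
  "tfinite_keys X \<longleftrightarrow> (\<forall>u\<in>keys X. tfinite u)"

lemma tfinite_keys_tmul: "tfinite_keys X \<Longrightarrow> tfinite_keys Y \<Longrightarrow> tfinite_keys (tmul X Y)"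
  unfolding tfinite_keys_def by (rule ball_keys_tmul) (simp add: tfinite_tmono_add)

lemma tmul_assoc:
  assumes "tfinite_keys X" "tfinite_keys Y" "tfinite_keys Z"
  shows "tmul (tmul X Y) Z = tmul X (tmul Y Z)"
proof -
  have "tmul (tmul X Y) Z = lin (\<lambda>u. lin (\<lambda>v. tmul (tbas u v) Z) Y) X"
    unfolding tmul_eq_lin_left by (simp only: lin_lin)
  also have "\<dots> = lin (\<lambda>u. lin (\<lambda>v. lin (\<lambda>z. lin (tbas u) (tbas v z)) Z) Y) X"
  proof (intro lin_cong)
    fix u v assume "u \<in> keys X" "v \<in> keys Y"
    then show "tmul (tbas u v) Z = lin (\<lambda>z. lin (tbas u) (tbas v z)) Z"
      unfolding tmul_eq_lin_right
      by (intro lin_cong tbas_assoc) (use assms in \<open>auto simp: tfinite_keys_def\<close>)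
  qed
  also have "\<dots> = tmul X (tmul Y Z)"
    by (simp add: tmul_eq_lin_left[of X] tmul_eq_lin_left[of Y] lin_lin)
  finally show ?thesis .
qed

lemma tsign_commute:
  assumes "tfinite u" "tfinite v" "tdisjoint u v"
  shows "tsign u v + tsign v u = tdeg u * tdeg v"
proof -
  obtain e1 r1 e2 r2 where uv: "u = (e1, r1)" "v = (e2, r2)" by (metis prod.exhaust)
  have "inv_count (snd e1) (snd e2) + inv_count (snd e2) (snd e1) = card (snd e1) * card (snd e2)"
    "inv_count (snd r1) (snd r2) + inv_count (snd r2) (snd r1) = card (snd r1) * card (snd r2)"
    using assms by (auto simp: uv tfinite_def tdisjoint_def intro: inv_count_swap)
  then show ?thesis unfolding uv tsign_def tdeg_def par_def by (simp add: algebra_simps)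
qed

lemma tbas_commute:
  assumes "tfinite u" "tfinite v"
  shows "tbas u v = sc ((- 1) ^ (tdeg u * tdeg v)) (tbas v u)"
proof (cases "tdisjoint u v")
  case True
  then have "tdisjoint v u" by (auto simp: tdisjoint_def)
  moreover have "tmono_add u v = tmono_add v u"
    by (simp add: tmono_add_def mono_add_def add.commute Un_commute)
  moreover have "(- 1 :: 'a) ^ tsign u v = (- 1) ^ (tdeg u * tdeg v + tsign v u)"
    using tsign_commute[OF assms True] by (intro neg_one_power_eq_if_even_add) presburger
  ultimately show ?thesis using True by (simp add: tbas_eq power_add)
next
  case False
  then show ?thesis by (auto simp: tbas_eq tdisjoint_def)
qed

lemma tmul_anticommute:
  assumes "\<forall>u\<in>keys X. tfinite u \<and> odd (tdeg u)" "\<forall>u\<in>keys Y. tfinite u \<and> odd (tdeg u)"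
  shows "tmul X Y = - tmul Y X"
proof -
  have "tmul X Y = lin (\<lambda>u. lin (\<lambda>v. sc (- 1) (tbas v u)) Y) X"
    unfolding tmul_eq_lin_left
  proof (intro lin_cong)
    fix u v assume "u \<in> keys X" "v \<in> keys Y"
    then have "tfinite u" "tfinite v" "odd (tdeg u * tdeg v)" using assms by auto
    then show "tbas u v = sc (- 1) (tbas v u)" by (simp add: tbas_commute[of u v])
  qed
  also have "\<dots> = - tmul Y X"
    by (simp add: tmul_eq_lin_right[of Y X] sc_uminus_left lin_uminus_fun)
  finally show ?thesis .
qed

section \<open>Weights\<close>

definition zeta_weight :: "nat \<Rightarrow> (nat \<Rightarrow>\<^sub>0 nat) \<Rightarrow> nat" where
  "zeta_weight p a = (\<Sum>k\<in>keys a. lookup a k * p ^ k)"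

text \<open>The weight of the \<open>(A//E(2))\<^sub>*\<close>-factor of \<open>\<kappa> m\<close>: the generator \<open>\<tau>\<^sub>2\<close> does not count.
  \<open>F\<^sup>j\<close> is spanned by the monomials \<open>m\<close> with \<open>fwt p m \<ge> p * j\<close>.\<close>

definition fwt :: "nat \<Rightarrow> mono \<Rightarrow> nat" where
  "fwt p m = wt p (fst m, snd m - {2})"

lemma zeta_weight_eq_sum_superset:
  "finite K \<Longrightarrow> keys a \<subseteq> K \<Longrightarrow> zeta_weight p a = (\<Sum>k\<in>K. lookup a k * p ^ k)"
  unfolding zeta_weight_def by (rule sum.mono_neutral_left) (auto simp: in_keys_iff)

lemma zeta_weight_add: "zeta_weight p (a + b) = zeta_weight p a + zeta_weight p b"
proof -
  let ?K = "keys a \<union> keys b"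
  have "zeta_weight p (a + b) = (\<Sum>k\<in>?K. lookup (a + b) k * p ^ k)"
    using keys_add[of a b] by (intro zeta_weight_eq_sum_superset) auto
  also have "\<dots> = (\<Sum>k\<in>?K. lookup a k * p ^ k) + (\<Sum>k\<in>?K. lookup b k * p ^ k)"
    by (simp add: lookup_add algebra_simps sum.distrib)
  also have "\<dots> = zeta_weight p a + zeta_weight p b"
    by (subst (1 2) zeta_weight_eq_sum_superset[where K = ?K]) auto
  finally show ?thesis .
qed

lemma fwt_eq: "fwt p m = zeta_weight p (fst m) + (\<Sum>s\<in>snd m - {2}. p ^ s)"
  by (simp add: fwt_def wt_def zeta_weight_def)

lemma fwt_mono_add:
  assumes "finite (snd m)" "finite (snd n)" "snd m \<inter> snd n = {}"
  shows "fwt p (mono_add m n) = fwt p m + fwt p n"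
proof -
  have "snd m \<union> snd n - {2} = (snd m - {2}) \<union> (snd n - {2})" by auto
  then show ?thesis
    using assms by (simp add: fwt_eq zeta_weight_add mono_add_def) (subst sum.union_disjoint, auto)
qed

lemma fwt_one [simp]: "fwt p (0, {}) = 0"
  by (simp add: fwt_eq zeta_weight_def)

lemma zpow_0 [simp]: "zpow 0 e = (0, {})"
  by (simp add: zpow_def)

lemma fwt_zpow: "fwt p (zpow k e) = (if k = 0 then 0 else e * p ^ k)"
  by (cases "e = 0") (simp_all add: zpow_def fwt_eq zeta_weight_def)

lemma fwt_tau: "fwt p (tau n) = (if n = 2 then 0 else p ^ n)"
  by (simp add: tau_def fwt_eq zeta_weight_def)

lemma dvd_fwt:
  assumes "mAE1 m"
  shows "p dvd fwt p m"
proof -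
  have "p dvd zeta_weight p (fst m)"
    unfolding zeta_weight_def
  proof (intro dvd_sum)
    fix k assume "k \<in> keys (fst m)"
    then have "k \<noteq> 0" using assms unfolding mAE1_def by metis
    then show "p dvd lookup (fst m) k * p ^ k" by (simp add: dvd_power)
  qed
  moreover have "p dvd (\<Sum>s\<in>snd m - {2}. p ^ s)"
    using assms by (intro dvd_sum) (auto simp: mAE1_def intro!: dvd_power[of _ p])
  ultimately show ?thesis by (simp add: fwt_eq)
qed

lemma mAE1_one [simp]: "mAE1 (0, {})"
  by (simp add: mAE1_def)

lemma mAE1_mono_add: "mAE1 m \<Longrightarrow> mAE1 n \<Longrightarrow> mAE1 (mono_add m n)"
  by (auto simp: mAE1_def mono_add_def dest: keys_add[THEN subsetD])

lemma subset_atLeast_3: "B \<subseteq> {2..} \<Longrightarrow> 2 \<notin> B \<Longrightarrow> B \<subseteq> {3::nat..}"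
  by (auto simp: subset_eq) (metis Suc_leI le_neq_implies_less numeral_2_eq_2 numeral_3_eq_3)

section \<open>The map \<open>\<kappa>\<close> on monomials\<close>

definition kappa_basis :: "mono \<Rightarrow> mono \<times> mono" where
  "kappa_basis m = (if 2 \<in> snd m then ((fst m, snd m - {2}), tau 2) else (m, (0, {})))"

definition kappa_sign :: "mono \<Rightarrow> 'k::comm_ring_1" where
  "kappa_sign m = (if 2 \<in> snd m then (- 1) ^ inv_count (snd m - {2}) {2} else 1)"

lemma tau2_eq: "tau 2 = (0, {2})"
  by (simp add: tau_def)

lemma kappa_mono_eq: "kappa_mono m = single (kappa_basis m) (kappa_sign m)"
  by (simp add: kappa_mono_def kappa_basis_def kappa_sign_def)

lemma inj_kappa_basis: "inj kappa_basis"
  by (auto simp: inj_def kappa_basis_def tau_def split: if_splits)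

lemma kappa_sign_square [simp]: "kappa_sign m * kappa_sign m = 1"
  by (simp add: kappa_sign_def flip: power_add)

lemma kappa_sign_mult_cancel: "kappa_sign m * c = kappa_sign m * d \<longleftrightarrow> c = d"
  by (metis kappa_sign_square mult.assoc mult_1)

lemma kappa_sign_mult_eq_0_iff [simp]: "kappa_sign m * c = 0 \<longleftrightarrow> c = 0"
  using kappa_sign_mult_cancel[of m c 0] by simp

lemma lookup_kappa: "lookup (kappa x) (kappa_basis m) = kappa_sign m * lookup x m"
proof -
  have "lookup (kappa x) (kappa_basis m) = (\<Sum>b\<in>keys x. lookup x b * (if b = m then kappa_sign m else 0))"
    unfolding kappa_def lookup_lin kappa_mono_eq
    by (intro sum.cong refl) (auto simp: lookup_single when_def dest: injD[OF inj_kappa_basis])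
  also have "\<dots> = kappa_sign m * lookup x m"
    by (cases "m \<in> keys x") (auto simp: if_distrib in_keys_iff cong: if_cong)
  finally show ?thesis .
qed

lemma keys_kappa: "keys (kappa x) = kappa_basis ` keys x"
proof
  show "keys (kappa x) \<subseteq> kappa_basis ` keys x"
  proof
    fix c assume c: "c \<in> keys (kappa x)"
    have "c \<in> range kappa_basis"
    proof (rule ccontr)
      assume "c \<notin> range kappa_basis"
      then have "lookup (kappa x) c = 0"
        unfolding kappa_def lookup_lin
        by (intro sum.neutral) (auto simp: lookup_single when_def kappa_mono_eq)
      with c show False by (simp add: in_keys_iff)
    qed
    then obtain m where "c = kappa_basis m" by auto
    with c show "c \<in> kappa_basis ` keys x"
      by (auto simp: in_keys_iff lookup_kappa)
  qed
  show "kappa_basis ` keys x \<subseteq> keys (kappa x)"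
    by (auto simp: in_keys_iff lookup_kappa)
qed

lemma inj_kappa: "inj (kappa :: (mono \<Rightarrow>\<^sub>0 'k::comm_ring_1) \<Rightarrow> _)"
proof (rule injI, rule poly_mapping_eqI)
  fix x y :: "mono \<Rightarrow>\<^sub>0 'k" and m
  assume "kappa x = kappa y"
  then show "lookup x m = lookup y m"
    by (metis lookup_kappa kappa_sign_mult_cancel)
qed

lemma kappa_zero [simp]: "kappa 0 = 0"
  by (simp add: kappa_def)

lemma kappa_add: "kappa (x + y) = kappa x + kappa y"
  by (simp add: kappa_def lin_add)

lemma kappa_sc: "kappa (sc c x) = sc c (kappa x)"
  by (simp add: kappa_def lin_sc)

lemma kappa_sum: "kappa (sum g A) = (\<Sum>a\<in>A. kappa (g a))"
  by (simp add: kappa_def lin_sum)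

lemma mAE2_fst_kappa_basis: "mAE1 m \<Longrightarrow> mAE2 (fst (kappa_basis m))"
  using subset_atLeast_3[of "snd m - {2}"] by (auto simp: mAE1_def mAE2_def kappa_basis_def)

lemma fst_kappa_basis [simp]: "fst (kappa_basis m) = (fst m, snd m - {2})"
  by (simp add: kappa_basis_def)

lemma snd_kappa_basis: "snd (kappa_basis m) \<in> {(0, {}), tau 2}"
  by (simp add: kappa_basis_def)

lemma kappa_in_TT: "x \<in> AE1 \<Longrightarrow> kappa x \<in> TT"
  using mAE2_fst_kappa_basis snd_kappa_basis by (fastforce simp: AE1_def TT_def keys_kappa)

lemma kappa_onto_TT:
  assumes "y \<in> TT"
  obtains x where "x \<in> AE1" "kappa x = y"
proof
  define kappa_inv :: "mono \<times> mono \<Rightarrow> (mono \<Rightarrow>\<^sub>0 'a)" where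
    "kappa_inv u = (if snd u = tau 2
      then single (fst (fst u), insert 2 (snd (fst u))) ((- 1) ^ inv_count (snd (fst u)) {2})
      else single (fst u) 1)" for u
  have u: "mAE2 (fst u)" "snd u = (0, {}) \<or> snd u = tau 2" if "u \<in> keys y" for u
    using assms that by (auto simp: TT_def)
  have "kappa (kappa_inv u) = single u 1" if "u \<in> keys y" for u
    using u[OF that]
    by (cases u) (auto simp: kappa_inv_def kappa_def kappa_mono_def mAE2_def tau_def
        simp flip: power_add)
  then have "kappa (lin kappa_inv y) = lin (\<lambda>u. single u 1) y"
    by (simp add: kappa_def lin_lin cong: lin_cong)
  also have "\<dots> = y"
    using lookup_lin_single_if[of "\<lambda>_. True" y] by (intro poly_mapping_eqI) simp
  finally show "kappa (lin kappa_inv y) = y" .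
  show "lin kappa_inv y \<in> AE1"
    unfolding AE1_def
  proof (intro CollectI ballI)
    fix m assume "m \<in> keys (lin kappa_inv y)"
    then obtain u where "u \<in> keys y" "m \<in> keys (kappa_inv u)"
      using keys_lin[of kappa_inv y] by blast
    moreover obtain a T t where "u = ((a, T), t)" by (metis prod.exhaust)
    ultimately have "mAE2 (a, T)" "m = (a, insert 2 T) \<or> m = (a, T)"
      using u(1)[of u] by (simp_all add: kappa_inv_def split: if_splits)
    then show "mAE1 m" by (auto simp: mAE1_def mAE2_def)
  qed
qed

lemma kappa_mmul_tau2_left:
  assumes "mAE1 (fa, A)" "mAE1 (fb, B)" "2 \<in> A" "2 \<notin> B" "A \<inter> B = {}"
  shows "kappa (mmul (fa, A) (fb, B)) = sc (kappa_sign (fa, A) * kappa_sign (fb, B))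
           (tbas (kappa_basis (fa, A)) (kappa_basis (fb, B)) :: _ \<Rightarrow>\<^sub>0 'k::comm_ring_1)"
proof -
  let ?A = "A - {2}"
  have fin: "finite ?A" "finite B" and ge3: "?A \<subseteq> {3..}" "B \<subseteq> {3..}"
    using assms subset_atLeast_3[of ?A] subset_atLeast_3[of B] by (auto simp: mAE1_def)
  have "inv_count A B = inv_count {2} B + inv_count ?A B"
    using fin assms(3) inv_count_Un_left[of "{2}" ?A B] by (simp add: insert_absorb)
  also have "inv_count {2} B = 0" using ge3 by (intro inv_count_eq_0) auto
  finally have AB: "inv_count A B = inv_count ?A B" by simp
  have "inv_count (?A \<union> B) {2} = card (?A \<union> B)"
    using fin ge3 by (intro inv_count_singleton_below) auto
  also have "\<dots> = card ?A + card B" using fin assms(5) by (intro card_Un_disjoint) auto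
  also have "?A \<union> B = A \<union> B - {2}" using assms(4) by auto
  finally have "kappa (mmul (fa, A) (fb, B)) = single ((fa + fb, ?A \<union> B), tau 2)
      ((- 1 :: 'k) ^ inv_count ?A B * (- 1) ^ (card ?A + card B))"
    using assms AB by (simp add: mmul_eq mono_add_def kappa_def kappa_mono_def Un_Diff)
  moreover have "tbas (kappa_basis (fa, A)) (kappa_basis (fb, B))
      = single ((fa + fb, ?A \<union> B), tau 2) ((- 1 :: 'k) ^ (card B + inv_count ?A B))"
    using assms by (auto simp: kappa_basis_def tbas_eq tdisjoint_def tmono_add_def mono_add_def
        tsign_def par_def tau2_eq)
  moreover have "inv_count ?A {2} = card ?A"
    using fin ge3 by (intro inv_count_singleton_below) auto
  ultimately show ?thesis
    using assms by (simp add: kappa_sign_def power_add mult_ac)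
qed

lemma kappa_mmul_tau2_right:
  assumes "mAE1 (fa, A)" "mAE1 (fb, B)" "2 \<notin> A" "2 \<in> B" "A \<inter> B = {}"
  shows "kappa (mmul (fa, A) (fb, B)) = sc (kappa_sign (fa, A) * kappa_sign (fb, B))
           (tbas (kappa_basis (fa, A)) (kappa_basis (fb, B)) :: _ \<Rightarrow>\<^sub>0 'k::comm_ring_1)"
proof -
  let ?B = "B - {2}"
  have fin: "finite A" "finite ?B" and ge3: "A \<subseteq> {3..}" "?B \<subseteq> {3..}"
    using assms subset_atLeast_3[of A] subset_atLeast_3[of ?B] by (auto simp: mAE1_def)
  have "inv_count A B = inv_count A {2} + inv_count A ?B"
    using fin assms(4) inv_count_Un_right[of A "{2}" ?B] by (simp add: insert_absorb)
  also have "inv_count A {2} = card A"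
    using fin ge3 by (intro inv_count_singleton_below) auto
  finally have AB: "inv_count A B = card A + inv_count A ?B" .
  have "inv_count (A \<union> ?B) {2} = card (A \<union> ?B)"
    using fin ge3 by (intro inv_count_singleton_below) auto
  also have "\<dots> = card A + card ?B" using fin assms(5) by (intro card_Un_disjoint) auto
  also have "A \<union> ?B = A \<union> B - {2}" using assms(3) by auto
  finally have "kappa (mmul (fa, A) (fb, B)) = single ((fa + fb, A \<union> ?B), tau 2)
      ((- 1 :: 'k) ^ (card A + inv_count A ?B) * (- 1) ^ (card A + card ?B))"
    using assms AB by (simp add: mmul_eq mono_add_def kappa_def kappa_mono_def Un_Diff)
  also have "(- 1 :: 'k) ^ (card A + inv_count A ?B) * (- 1) ^ (card A + card ?B)
      = (- 1) ^ (inv_count A ?B + card ?B)"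
    by (simp flip: power_add, rule neg_one_power_eq_if_even_add) auto
  moreover have "tbas (kappa_basis (fa, A)) (kappa_basis (fb, B))
      = single ((fa + fb, A \<union> ?B), tau 2) ((- 1 :: 'k) ^ inv_count A ?B)"
    using assms by (auto simp: kappa_basis_def tbas_eq tdisjoint_def tmono_add_def mono_add_def
        tsign_def par_def tau2_eq)
  moreover have "inv_count ?B {2} = card ?B"
    using fin ge3 by (intro inv_count_singleton_below) auto
  ultimately show ?thesis
    using assms by (simp add: kappa_sign_def power_add mult_ac)
qed

lemma kappa_mmul:
  assumes "mAE1 a" "mAE1 b"
  shows "kappa (mmul a b) = sc (kappa_sign a * kappa_sign b)
           (tbas (kappa_basis a) (kappa_basis b) :: _ \<Rightarrow>\<^sub>0 'k::comm_ring_1)"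
proof -
  obtain fa A fb B where ab: "a = (fa, A)" "b = (fb, B)" by (metis prod.exhaust)
  consider "A \<inter> B \<noteq> {}" | "A \<inter> B = {}" "2 \<in> A" "2 \<notin> B" | "A \<inter> B = {}" "2 \<notin> A" "2 \<in> B"
    | "A \<inter> B = {}" "2 \<notin> A" "2 \<notin> B"
    by blast
  then show ?thesis
  proof cases
    case 1
    then show ?thesis by (auto simp: ab mmul_eq kappa_basis_def tbas_eq tdisjoint_def tau2_eq)
  next
    case 2
    then show ?thesis using assms kappa_mmul_tau2_left by (simp add: ab)
  next
    case 3
    then show ?thesis using assms kappa_mmul_tau2_right by (simp add: ab)
  next
    case 4
    then show ?thesis
      by (simp add: ab mmul_eq kappa_basis_def tbas_eq tdisjoint_def tmono_add_def mono_add_def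
          tsign_def par_def kappa_def kappa_mono_def kappa_sign_def)
  qed
qed

lemma kappa_vmul:
  assumes "x \<in> AE1" "y \<in> AE1"
  shows "kappa (vmul x y) = tmul (kappa x) (kappa (y :: mono \<Rightarrow>\<^sub>0 'k::comm_ring_1))"
proof -
  have "kappa (vmul x y) = bilin (\<lambda>a b. kappa (mmul a b)) x y"
    by (simp add: vmul_def kappa_def lin_bilin)
  also have "\<dots> = bilin (\<lambda>a b. bilin tbas (kappa_mono a) (kappa_mono b)) x y"
    by (rule bilin_cong) (use assms in \<open>simp add: AE1_def kappa_mmul kappa_mono_eq\<close>)
  also have "\<dots> = tmul (kappa x) (kappa y)"
    by (simp add: tmul_def kappa_def bilin_lin_lin)
  finally show ?thesis .
qed

section \<open>The filtration and its homogeneous parts\<close>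

definition filtered :: "nat \<Rightarrow> nat \<Rightarrow> (mono \<Rightarrow>\<^sub>0 'k::comm_ring_1) \<Rightarrow> bool" where
  "filtered p j x \<longleftrightarrow> (\<forall>m\<in>keys x. mAE1 m \<and> p * j \<le> fwt p m)"

definition hpart :: "nat \<Rightarrow> nat \<Rightarrow> (mono \<Rightarrow>\<^sub>0 'k::comm_ring_1) \<Rightarrow> (mono \<Rightarrow>\<^sub>0 'k)" where
  "hpart p j = lin (\<lambda>m. if fwt p m = p * j then single m 1 else 0)"

lemma Fil_eq:
  assumes "p > 0"
  shows "Fil p j = {x. filtered p j x}"
proof -
  have key: "(\<exists>k\<ge>j. fwt p m = p * k) \<longleftrightarrow> p * j \<le> fwt p m" if "mAE1 m" for m
    using dvd_fwt[OF that, of p] assms by (auto elim!: dvdE)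
  have "x \<in> Fil p j \<longleftrightarrow> x \<in> AE1 \<and> (\<forall>m\<in>keys x. \<exists>k\<ge>j. fwt p m = p * k)" for x
    using kappa_in_TT[of x] by (auto simp: Fil_def TF_def keys_kappa fwt_def)
  then show ?thesis
    unfolding filtered_def AE1_def mem_Collect_eq using key by blast
qed

lemma filtered_0_iff: "filtered p 0 x \<longleftrightarrow> x \<in> AE1"
  by (simp add: filtered_def AE1_def)

lemma filtered_zero: "filtered p j 0"
  by (simp add: filtered_def)

lemma filtered_add: "filtered p j x \<Longrightarrow> filtered p j y \<Longrightarrow> filtered p j (x + y)"
  by (auto simp: filtered_def dest: keys_add[THEN subsetD])

lemma filtered_sc: "filtered p j x \<Longrightarrow> filtered p j (sc c x)"
  by (auto simp: filtered_def dest: keys_sc[THEN subsetD])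

lemma filtered_uminus: "filtered p j x \<Longrightarrow> filtered p j (- x)"
  by (auto simp: filtered_def)

lemma filtered_diff: "filtered p j x \<Longrightarrow> filtered p j y \<Longrightarrow> filtered p j (x - y)"
  unfolding diff_conv_add_uminus by (intro filtered_add filtered_uminus)

lemma filtered_sum: "(\<And>a. a \<in> A \<Longrightarrow> filtered p j (g a)) \<Longrightarrow> filtered p j (sum g A)"
  by (induction A rule: infinite_finite_induct) (simp_all add: filtered_zero filtered_add)

lemma filtered_mono: "filtered p j x \<Longrightarrow> i \<le> j \<Longrightarrow> filtered p i x"
  by (auto simp: filtered_def) (meson le_trans mult_le_mono2)

lemma filtered_vmul:
  assumes "filtered p i x" "filtered p k y"
  shows "filtered p (i + k) (vmul x y)"
  unfolding filtered_def
proof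
  fix c assume "c \<in> keys (vmul x y)"
  then obtain a b where ab: "a \<in> keys x" "b \<in> keys y" "c \<in> keys (mmul a b :: _ \<Rightarrow>\<^sub>0 'a)"
    using keys_bilin[of mmul x y] unfolding vmul_def by blast
  then have "mAE1 a" "p * i \<le> fwt p a" "mAE1 b" "p * k \<le> fwt p b"
    using assms by (auto simp: filtered_def)
  moreover have "c = mono_add a b" "snd a \<inter> snd b = {}"
    using ab(3) by (auto simp: mmul_eq split: if_splits)
  moreover have "finite (snd a)" "finite (snd b)"
    using \<open>mAE1 a\<close> \<open>mAE1 b\<close> by (simp_all add: mAE1_def)
  ultimately show "mAE1 c \<and> p * (i + k) \<le> fwt p c"
    by (simp add: mAE1_mono_add fwt_mono_add add_mono algebra_simps)
qed

lemma lookup_hpart: "lookup (hpart p j x) m = (if fwt p m = p * j then lookup x m else 0)"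
  unfolding hpart_def by (rule lookup_lin_single_if)

lemma keys_hpart: "keys (hpart p j x) = {m \<in> keys x. fwt p m = p * j}"
  by (auto simp: in_keys_iff lookup_hpart split: if_splits)

lemma hpart_zero [simp]: "hpart p j 0 = 0"
  by (simp add: hpart_def)

lemma hpart_add: "hpart p j (x + y) = hpart p j x + hpart p j y"
  by (simp add: hpart_def lin_add)

lemma hpart_sc: "hpart p j (sc c x) = sc c (hpart p j x)"
  by (simp add: hpart_def lin_sc)

lemma hpart_diff: "hpart p j (x - y) = hpart p j x - hpart p j y"
  by (simp add: hpart_def lin_diff)

lemma hpart_sum: "hpart p j (sum g A) = (\<Sum>a\<in>A. hpart p j (g a))"
  by (simp add: hpart_def lin_sum)

lemma hpart_hpart: "p > 0 \<Longrightarrow> hpart p i (hpart p j x) = (if i = j then hpart p j x else 0)"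
  by (rule poly_mapping_eqI) (auto simp: lookup_hpart)

lemma filtered_hpart: "filtered p j x \<Longrightarrow> filtered p j (hpart p j x)"
  by (auto simp: filtered_def keys_hpart)

text \<open>\<open>F\<^sup>j/F\<^sup>j\<^sup>+\<^sup>1\<close> is detected by the homogeneous part of weight \<open>p * j\<close>, since all weights
  in \<open>(A//E(1))\<^sub>*\<close> are multiples of \<open>p\<close>.\<close>

lemma filtered_Suc_iff:
  assumes "p > 0" "filtered p j x"
  shows "filtered p (Suc j) x \<longleftrightarrow> hpart p j x = 0"
proof -
  have "p * Suc j \<le> fwt p m \<longleftrightarrow> fwt p m \<noteq> p * j" if "m \<in> keys x" for m
  proof -
    have "mAE1 m" "p * j \<le> fwt p m" using assms(2) that by (auto simp: filtered_def)
    moreover obtain k where k: "fwt p m = p * k" using dvd_fwt[OF \<open>mAE1 m\<close>, of p] by blast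
    ultimately have "j \<le> k" using assms(1) by simp
    then show ?thesis using assms(1) by (auto simp: k mult_le_cancel1 simp del: mult_Suc_right)
  qed
  then show ?thesis
    using assms(2) by (auto simp: filtered_def keys_hpart simp flip: keys_eq_empty)
qed

lemma filtered_Suc_diff_hpart: "p > 0 \<Longrightarrow> filtered p j x \<Longrightarrow> filtered p (Suc j) (x - hpart p j x)"
  by (simp add: filtered_Suc_iff filtered_diff filtered_hpart hpart_diff hpart_hpart)

lemma sum_hpart:
  assumes "p > 0" "finite J" "\<And>m. m \<in> keys x \<Longrightarrow> \<exists>j\<in>J. fwt p m = p * j"
  shows "(\<Sum>j\<in>J. hpart p j x) = x"
proof (rule poly_mapping_eqI)
  fix m
  show "lookup (\<Sum>j\<in>J. hpart p j x) m = lookup x m"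
  proof (cases "m \<in> keys x")
    case True
    then obtain j where "j \<in> J" "fwt p m = p * j" using assms(3) by blast
    then show ?thesis
      using assms(1,2) by (simp add: lookup_sum lookup_hpart sum.delta' cong: if_cong)
  next
    case False
    then show ?thesis by (simp add: lookup_sum lookup_hpart in_keys_iff cong: if_cong)
  qed
qed

lemma prj_kappa: "prj p j (kappa x) = kappa (hpart p j x)"
  unfolding prj_def kappa_def hpart_def lin_lin
  by (rule lin_cong) (simp add: kappa_mono_eq fwt_def kappa_basis_def)

lemma hpart_vmul:
  assumes "filtered p i x" "filtered p k y"
  shows "hpart p (i + k) (vmul x y) = vmul (hpart p i x) (hpart p k y)"
proof -
  have "hpart p (i + k) (vmul x y) = bilin (\<lambda>a b. hpart p (i + k) (mmul a b)) x y"
    by (simp add: vmul_def hpart_def lin_bilin)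
  also have "\<dots> = bilin (\<lambda>a b. bilin mmul (if fwt p a = p * i then single a 1 else 0)
      (if fwt p b = p * k then single b 1 else 0)) x y"
  proof (rule bilin_cong)
    fix a b assume "a \<in> keys x" "b \<in> keys y"
    then have ab: "mAE1 a" "p * i \<le> fwt p a" "mAE1 b" "p * k \<le> fwt p b"
      using assms by (auto simp: filtered_def)
    then have "fwt p (mono_add a b) = p * (i + k) \<longleftrightarrow> fwt p a = p * i \<and> fwt p b = p * k"
      if "snd a \<inter> snd b = {}"
      using that by (auto simp: fwt_mono_add mAE1_def algebra_simps)
    then show "hpart p (i + k) (mmul a b) = bilin mmul (if fwt p a = p * i then single a 1 else 0)
        (if fwt p b = p * k then single b 1 else 0)"
      by (auto simp: mmul_eq hpart_def)
  qed
  also have "\<dots> = vmul (hpart p i x) (hpart p k y)"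
    by (simp add: vmul_def hpart_def bilin_lin_lin)
  finally show ?thesis .
qed

section \<open>The coaction modulo higher filtration\<close>

definition rpart :: "nat \<Rightarrow> nat \<Rightarrow> ((mono \<times> mono) \<Rightarrow>\<^sub>0 'k::comm_ring_1) \<Rightarrow> ((mono \<times> mono) \<Rightarrow>\<^sub>0 'k)"
  where "rpart p w = lin (\<lambda>u. if fwt p (snd u) = w then single u 1 else 0)"

definition rweight_ge :: "nat \<Rightarrow> nat \<Rightarrow> ((mono \<times> mono) \<Rightarrow>\<^sub>0 'k::comm_ring_1) \<Rightarrow> bool" where
  "rweight_ge p w X \<longleftrightarrow> (\<forall>u\<in>keys X. tfinite u \<and> w \<le> fwt p (snd u))"

lemma lookup_rpart: "lookup (rpart p w X) u = (if fwt p (snd u) = w then lookup X u else 0)"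
  unfolding rpart_def by (rule lookup_lin_single_if)

lemma keys_rpart: "keys (rpart p w X) = {u \<in> keys X. fwt p (snd u) = w}"
  by (auto simp: in_keys_iff lookup_rpart split: if_splits)

lemma rpart_id: "(\<And>u. u \<in> keys X \<Longrightarrow> fwt p (snd u) = w) \<Longrightarrow> rpart p w X = X"
  by (rule poly_mapping_eqI) (auto simp: lookup_rpart in_keys_iff)

lemma rpart_zero [simp]: "rpart p w 0 = 0"
  by (simp add: rpart_def)

lemma rpart_add: "rpart p w (X + Y) = rpart p w X + rpart p w Y"
  by (simp add: rpart_def lin_add)

lemma rpart_single: "rpart p w (single u c) = (if fwt p (snd u) = w then single u c else 0)"
  by (simp add: rpart_def)

lemma fwt_snd_tmono_add:
  "tfinite u \<Longrightarrow> tfinite v \<Longrightarrow> tdisjoint u v \<Longrightarrow>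
    fwt p (snd (tmono_add u v)) = fwt p (snd u) + fwt p (snd v)"
  by (auto simp: tfinite_def tdisjoint_def snd_tmono_add intro!: fwt_mono_add)

lemma rweight_ge_tmul:
  assumes "rweight_ge p a X" "rweight_ge p b Y"
  shows "rweight_ge p (a + b) (tmul X Y)"
  unfolding rweight_ge_def
proof (rule ball_keys_tmul)
  fix u v assume "u \<in> keys X" "v \<in> keys Y" "tdisjoint u v"
  moreover from this(1,2) have "tfinite u" "tfinite v" "a \<le> fwt p (snd u)" "b \<le> fwt p (snd v)"
    using assms by (auto simp: rweight_ge_def)
  ultimately show "tfinite (tmono_add u v) \<and> a + b \<le> fwt p (snd (tmono_add u v))"
    by (simp add: tfinite_tmono_add fwt_snd_tmono_add)
qed

lemma rpart_tmul:
  assumes "rweight_ge p a X" "rweight_ge p b Y"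
  shows "rpart p (a + b) (tmul X Y) = tmul (rpart p a X) (rpart p b Y)"
proof -
  have "rpart p (a + b) (tmul X Y) = bilin (\<lambda>u v. rpart p (a + b) (tbas u v)) X Y"
    by (simp add: tmul_def rpart_def lin_bilin)
  also have "\<dots> = bilin (\<lambda>u v. bilin tbas (if fwt p (snd u) = a then single u 1 else 0)
      (if fwt p (snd v) = b then single v 1 else 0)) X Y"
  proof (rule bilin_cong)
    fix u v assume "u \<in> keys X" "v \<in> keys Y"
    then have "tfinite u" "tfinite v" "a \<le> fwt p (snd u)" "b \<le> fwt p (snd v)"
      using assms by (auto simp: rweight_ge_def)
    then have "fwt p (snd (tmono_add u v)) = a + b \<longleftrightarrow> fwt p (snd u) = a \<and> fwt p (snd v) = b"
      if "tdisjoint u v"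
      using that by (auto simp: fwt_snd_tmono_add)
    then show "rpart p (a + b) (tbas u v) = bilin tbas (if fwt p (snd u) = a then single u 1 else 0)
        (if fwt p (snd v) = b then single v 1 else 0)"
      by (auto simp: tbas_eq rpart_single)
  qed
  also have "\<dots> = tmul (rpart p a X) (rpart p b Y)"
    by (simp add: tmul_def rpart_def bilin_lin_lin)
  finally show ?thesis .
qed

text \<open>The part of \<open>\<alpha>(\<tau>\<^sub>n)\<close> of least right weight: all of it for \<open>n \<ge> 3\<close>, but only
  \<open>1 \<otimes> \<tau>\<^sub>2 + \<tau>\<^sub>2 \<otimes> 1\<close> for \<open>n = 2\<close>.\<close>

definition tau_lead :: "nat \<Rightarrow> nat \<Rightarrow> ((mono \<times> mono) \<Rightarrow>\<^sub>0 'k::comm_ring_1)" where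
  "tau_lead p n = (if n = 2 then single ((0, {}), tau 2) 1 + single (tau 2, (0, {})) 1
     else alpha_tau p n)"

definition lead_mono :: "nat \<Rightarrow> mono \<Rightarrow> ((mono \<times> mono) \<Rightarrow>\<^sub>0 'k::comm_ring_1)" where
  "lead_mono p m = foldl (\<lambda>X n. tmul X (tau_lead p n))
     (single ((0, {}), (fst m, {})) 1) (sorted_list_of_set (snd m))"

lemma alpha_tau_eq:
  "alpha_tau p n = single ((0, {}), tau n) 1 + single (tau 0, zpow n 1) 1
     + single (tau 1, zpow (n - 1) p) 1 + single (tau 2, zpow (n - 2) (p ^ 2)) 1"
proof -
  have "{..2::nat} = {0, 1, 2}" by auto
  then show ?thesis by (simp add: alpha_tau_def add.assoc)
qed

lemma keys_alpha_tau:
  "keys (alpha_tau p n) \<subseteq>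
    {((0, {}), tau n), (tau 0, zpow n 1), (tau 1, zpow (n - 1) p), (tau 2, zpow (n - 2) (p ^ 2))}"
  unfolding alpha_tau_eq
  by (intro order.trans[OF keys_add] Un_least) (auto dest: keys_add[THEN subsetD])

lemma keys_alpha_tau_props:
  assumes "p > 0" "n \<ge> 2" "u \<in> keys (alpha_tau p n)"
  shows "tfinite u" "odd (tdeg u)" "mAE1 (snd u)" "snd (snd u) \<subseteq> {n}"
    "fwt p (tau n) \<le> fwt p (snd u)" "n \<noteq> 2 \<Longrightarrow> fwt p (snd u) = p ^ n"
proof -
  have u: "u \<in> {((0, {}), tau n), (tau 0, zpow n 1), (tau 1, zpow (n - 1) p),
      (tau 2, zpow (n - 2) (p ^ 2))}"
    using keys_alpha_tau assms(3) by blast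
  obtain k where k: "n = Suc (Suc k)" using assms(2) by (metis add_2_eq_Suc le_Suc_ex)
  then have "p ^ 2 * p ^ (n - 2) = p ^ n" "p * p ^ (n - 1) = p ^ n"
    by (simp_all add: power2_eq_square)
  then show "fwt p (tau n) \<le> fwt p (snd u)" "n \<noteq> 2 \<Longrightarrow> fwt p (snd u) = p ^ n"
    using u assms by (auto simp: fwt_zpow fwt_tau)
  show "tfinite u" "odd (tdeg u)" "snd (snd u) \<subseteq> {n}" "mAE1 (snd u)"
    using u assms by (auto simp: tfinite_def tau_def zpow_def tdeg_def mAE1_def split: if_splits)
qed

lemma rweight_ge_alpha_tau: "p > 0 \<Longrightarrow> n \<ge> 2 \<Longrightarrow> rweight_ge p (fwt p (tau n)) (alpha_tau p n)"
  using keys_alpha_tau_props by (auto simp: rweight_ge_def)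

lemma rpart_alpha_tau:
  assumes "p > 0" "n \<ge> 2"
  shows "rpart p (fwt p (tau n)) (alpha_tau p n :: _ \<Rightarrow>\<^sub>0 'k::comm_ring_1) = tau_lead p n"
proof (cases "n = 2")
  case True
  have "p * p \<noteq> 0" "p ^ 2 \<noteq> 0" using assms by auto
  then show ?thesis
    using True by (simp add: alpha_tau_eq rpart_add rpart_single tau_lead_def fwt_zpow fwt_tau)
next
  case False
  have "rpart p (p ^ n) (alpha_tau p n :: _ \<Rightarrow>\<^sub>0 'k) = alpha_tau p n"
    by (rule rpart_id) (rule keys_alpha_tau_props(6)[OF assms _ False])
  then show ?thesis using False by (simp add: fwt_tau tau_lead_def)
qed

lemma keys_tau_lead_props:
  assumes "p > 0" "n \<ge> 2" "u \<in> keys (tau_lead p n :: _ \<Rightarrow>\<^sub>0 'k::comm_ring_1)"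
  shows "tfinite u" "odd (tdeg u)" "mAE1 (snd u)" "snd (snd u) \<subseteq> {n}"
proof -
  have "u \<in> keys (alpha_tau p n :: _ \<Rightarrow>\<^sub>0 'k)"
    using assms(3) unfolding rpart_alpha_tau[OF assms(1,2), symmetric] keys_rpart by blast
  then show "tfinite u" "odd (tdeg u)" "mAE1 (snd u)" "snd (snd u) \<subseteq> {n}"
    by (rule keys_alpha_tau_props[OF assms(1,2)])+
qed

lemma rweight_ge_foldl_alpha_tau:
  assumes "p > 0" "\<forall>n\<in>set L. n \<ge> 2" "rweight_ge p w X"
  shows "rweight_ge p (w + (\<Sum>n\<leftarrow>L. fwt p (tau n))) (foldl (\<lambda>X n. tmul X (alpha_tau p n)) X L)"
  using assms(2,3)
proof (induction L arbitrary: X w)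
  case (Cons n L)
  then have n: "n \<ge> 2" by simp
  have "rweight_ge p (w + fwt p (tau n)) (tmul X (alpha_tau p n))"
    by (rule rweight_ge_tmul[OF Cons.prems(2) rweight_ge_alpha_tau[OF assms(1) n]])
  from Cons.IH[OF _ this] Cons.prems show ?case by (simp add: add.assoc)
qed simp

lemma rpart_foldl_alpha_tau:
  assumes "p > 0" "\<forall>n\<in>set L. n \<ge> 2" "rweight_ge p w X"
  shows "rpart p (w + (\<Sum>n\<leftarrow>L. fwt p (tau n))) (foldl (\<lambda>X n. tmul X (alpha_tau p n)) X L)
    = foldl (\<lambda>X n. tmul X (tau_lead p n)) (rpart p w X) L"
  using assms(2,3)
proof (induction L arbitrary: X w)
  case (Cons n L)
  then have n: "n \<ge> 2" by simp
  have "rweight_ge p (w + fwt p (tau n)) (tmul X (alpha_tau p n))"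
    by (rule rweight_ge_tmul[OF Cons.prems(2) rweight_ge_alpha_tau[OF assms(1) n]])
  moreover have "rpart p (w + fwt p (tau n)) (tmul X (alpha_tau p n)) = tmul (rpart p w X) (tau_lead p n)"
    using rpart_tmul[OF Cons.prems(2) rweight_ge_alpha_tau[OF assms(1) n]]
    by (simp add: rpart_alpha_tau[OF assms(1) n])
  ultimately show ?case
    using Cons.IH[of "w + fwt p (tau n)" "tmul X (alpha_tau p n)"] Cons.prems(1)
    by (simp add: add.assoc)
qed simp

lemma fwt_eq_sum_tau:
  assumes "finite (snd m)"
  shows "fwt p m = zeta_weight p (fst m) + (\<Sum>n\<leftarrow>sorted_list_of_set (snd m). fwt p (tau n))"
proof -
  have "(\<Sum>n\<leftarrow>sorted_list_of_set (snd m). fwt p (tau n)) = (\<Sum>n\<in>snd m. fwt p (tau n))"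
    using assms by (simp add: sum_list_distinct_conv_sum_set)
  also have "\<dots> = (\<Sum>n\<in>snd m - {2}. fwt p (tau n))"
    using assms by (intro sum.mono_neutral_right) (auto simp: fwt_tau)
  also have "\<dots> = (\<Sum>n\<in>snd m - {2}. p ^ n)"
    by (intro sum.cong) (auto simp: fwt_tau)
  finally show ?thesis by (simp add: fwt_eq)
qed

lemma rweight_ge_alpha_mono:
  assumes "p > 0" "mAE1 m"
  shows "rweight_ge p (fwt p m) (alpha_mono p m :: _ \<Rightarrow>\<^sub>0 'k::comm_ring_1)"
proof -
  have L: "\<forall>n\<in>set (sorted_list_of_set (snd m)). n \<ge> 2" and fin: "finite (snd m)"
    using assms(2) by (auto simp: mAE1_def)
  have "rweight_ge p (zeta_weight p (fst m)) (single ((0, {}), (fst m, {})) 1 :: _ \<Rightarrow>\<^sub>0 'k)"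
    by (simp add: rweight_ge_def tfinite_def fwt_eq)
  then show ?thesis
    unfolding alpha_mono_def fwt_eq_sum_tau[OF fin] by (rule rweight_ge_foldl_alpha_tau[OF assms(1) L])
qed

lemma rpart_alpha_mono:
  assumes "p > 0" "mAE1 m"
  shows "rpart p (fwt p m) (alpha_mono p m) = (lead_mono p m :: _ \<Rightarrow>\<^sub>0 'k::comm_ring_1)"
proof -
  let ?X = "single ((0, {}), (fst m, {})) 1 :: _ \<Rightarrow>\<^sub>0 'k"
  have L: "\<forall>n\<in>set (sorted_list_of_set (snd m)). n \<ge> 2" and fin: "finite (snd m)"
    using assms(2) by (auto simp: mAE1_def)
  have "rweight_ge p (zeta_weight p (fst m)) ?X" "rpart p (zeta_weight p (fst m)) ?X = ?X"
    by (simp_all add: rweight_ge_def tfinite_def fwt_eq rpart_single)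
  then show ?thesis
    unfolding alpha_mono_def lead_mono_def fwt_eq_sum_tau[OF fin]
    by (simp only: rpart_foldl_alpha_tau[OF assms(1) L])
qed

definition right_AE1 :: "nat set \<Rightarrow> ((mono \<times> mono) \<Rightarrow>\<^sub>0 'k::comm_ring_1) \<Rightarrow> bool" where
  "right_AE1 T X \<longleftrightarrow> (\<forall>u\<in>keys X. tfinite u \<and> mAE1 (snd u) \<and> snd (snd u) \<subseteq> T)"

lemma right_AE1_tmul: "right_AE1 T X \<Longrightarrow> right_AE1 T Y \<Longrightarrow> right_AE1 T (tmul X Y)"
  unfolding right_AE1_def
  by (rule ball_keys_tmul) (auto simp: tfinite_tmono_add mAE1_mono_add snd_tmono_add)

lemma right_AE1_foldl:
  assumes "right_AE1 T X" "set L \<subseteq> T" "\<forall>n\<in>set L. n \<ge> 2"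
    "\<And>n u. n \<ge> 2 \<Longrightarrow> u \<in> keys (f n) \<Longrightarrow> tfinite u \<and> mAE1 (snd u) \<and> snd (snd u) \<subseteq> {n}"
  shows "right_AE1 T (foldl (\<lambda>X n. tmul X (f n)) X L)"
  using assms(1-3)
proof (induction L arbitrary: X)
  case (Cons n L)
  then have n: "n \<ge> 2" "n \<in> T" by auto
  have "right_AE1 T (f n)" unfolding right_AE1_def using assms(4)[OF n(1)] n(2) by blast
  with Cons show ?case by (simp add: right_AE1_tmul)
qed simp

lemma right_AE1_alpha_mono:
  assumes "p > 0" "mAE1 m"
  shows "right_AE1 (snd m) (alpha_mono p m)"
  unfolding alpha_mono_def
proof (rule right_AE1_foldl)
  show "right_AE1 (snd m) (single ((0, {}), (fst m, {})) 1)"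
    using assms(2) by (simp add: right_AE1_def tfinite_def mAE1_def)
  show "set (sorted_list_of_set (snd m)) \<subseteq> snd m" "\<forall>n\<in>set (sorted_list_of_set (snd m)). n \<ge> 2"
    using assms(2) by (auto simp: mAE1_def)
  fix n u assume "n \<ge> 2" "u \<in> keys (alpha_tau p n)"
  then show "tfinite u \<and> mAE1 (snd u) \<and> snd (snd u) \<subseteq> {n}"
    using keys_alpha_tau_props[OF assms(1)] by blast
qed

section \<open>The associated graded coaction is the diagonal one\<close>

definition kappa_right :: "((mono \<times> mono) \<Rightarrow>\<^sub>0 'k::comm_ring_1) \<Rightarrow> ((mono \<times> (mono \<times> mono)) \<Rightarrow>\<^sub>0 'k)"
  where "kappa_right = lin (\<lambda>u. lin (\<lambda>mt. single (fst u, mt) 1) (kappa_mono (snd u)))"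

lemma kappa_right_single:
  "kappa_right (single (e, r) c) = single (e, kappa_basis r) (c * kappa_sign r)"
  by (simp add: kappa_right_def kappa_mono_eq)

lemma kappa_right_zero [simp]: "kappa_right 0 = 0"
  by (simp add: kappa_right_def)

lemma kappa_right_lin: "kappa_right (lin f Y) = lin (\<lambda>u. kappa_right (f u)) Y"
  by (simp add: kappa_right_def lin_lin)

lemma kappa_right_add: "kappa_right (X + Y) = kappa_right X + kappa_right Y"
  by (simp add: kappa_right_def lin_add)

lemma kappa_right_sc: "kappa_right (sc c X) = sc c (kappa_right X)"
  by (simp add: kappa_right_def lin_sc)

lemma mmul_one_right: "mmul e (0, {}) = single e 1"
  by (simp add: mmul_eq mono_add_def)

lemma tmul_sc_left: "tmul (sc c X) Y = sc c (tmul X Y)"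
  by (simp add: tmul_def bilin_sc_left)

lemma tmul_uminus_right: "tmul X (- Y) = - tmul X Y"
  by (simp add: tmul_def bilin_uminus_right)

lemma lead_mono_eq_alpha_mono:
  assumes "finite (snd m)" "2 \<notin> snd m"
  shows "lead_mono p m = alpha_mono p m"
  unfolding lead_mono_def alpha_mono_def
  by (rule foldl_cong) (use assms in \<open>auto simp: tau_lead_def\<close>)

lemma tfinite_keys_tau_lead: "p > 0 \<Longrightarrow> n \<ge> 2 \<Longrightarrow> tfinite_keys (tau_lead p n)"
  using keys_tau_lead_props by (auto simp: tfinite_keys_def)

lemma foldl_tmul_sc:
  "foldl (\<lambda>X n. tmul X (f n)) (sc c X) L = sc c (foldl (\<lambda>X n. tmul X (f n)) X L)"
  by (induction L arbitrary: X) (simp_all add: tmul_sc_left)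

lemma foldl_tau_lead_tau2:
  fixes X :: "(mono \<times> mono) \<Rightarrow>\<^sub>0 'k::comm_ring_1"
  assumes "p > 0" "\<forall>n\<in>set L. n \<ge> 3" "tfinite_keys X"
  shows "foldl (\<lambda>X n. tmul X (tau_lead p n)) (tmul X (tau_lead p 2)) L
    = sc ((- 1) ^ length L) (tmul (foldl (\<lambda>X n. tmul X (tau_lead p n)) X L) (tau_lead p 2))"
  using assms(2,3)
proof (induction L arbitrary: X)
  case (Cons n L)
  let ?P = "tau_lead p 2 :: _ \<Rightarrow>\<^sub>0 'k" and ?A = "tau_lead p n :: _ \<Rightarrow>\<^sub>0 'k"
  have n: "n \<ge> 2" using Cons.prems by auto
  have fin: "tfinite_keys ?P" "tfinite_keys ?A" "tfinite_keys (tmul X ?A)"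
    using tfinite_keys_tau_lead[OF assms(1)] n Cons.prems(2) by (auto intro: tfinite_keys_tmul)
  have odd_keys: "\<forall>u\<in>keys (tau_lead p k :: _ \<Rightarrow>\<^sub>0 'k). tfinite u \<and> odd (tdeg u)"
    if "k \<ge> 2" for k
    using keys_tau_lead_props(1,2)[OF assms(1) that] by blast
  have "tmul ?P ?A = - tmul ?A ?P"
    by (rule tmul_anticommute[OF odd_keys[OF order_refl] odd_keys[OF n]])
  then have "tmul (tmul X ?P) ?A = sc (- 1) (tmul (tmul X ?A) ?P)"
    using Cons.prems(2) fin by (simp add: tmul_assoc tmul_uminus_right sc_uminus_left)
  then show ?case
    using Cons.IH[OF _ fin(3)] Cons.prems by (simp add: foldl_tmul_sc)
qed simp

lemma alpha_single [simp]: "alpha p (single m 1) = alpha_mono p m"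
  by (simp add: alpha_def)

lemma kappa_right_lead_mono_no_tau2:
  assumes "p > 0" "mAE1 m" "2 \<notin> snd m"
  shows "kappa_right (lead_mono p m) = alphaT p (kappa_mono m :: _ \<Rightarrow>\<^sub>0 'k::comm_ring_1)"
proof -
  have "finite (snd m)" using assms(2) by (simp add: mAE1_def)
  then have lead: "lead_mono p m = (alpha_mono p m :: _ \<Rightarrow>\<^sub>0 'k)"
    using assms(3) by (rule lead_mono_eq_alpha_mono)
  have "kappa_right (alpha_mono p m :: _ \<Rightarrow>\<^sub>0 'k)
      = lin (\<lambda>u. single (fst u, (snd u, (0, {}))) 1) (alpha_mono p m)"
    unfolding kappa_right_def
  proof (rule lin_cong)
    fix u assume "u \<in> keys (alpha_mono p m :: _ \<Rightarrow>\<^sub>0 'k)"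
    then have "2 \<notin> snd (snd u)"
      using right_AE1_alpha_mono[OF assms(1,2)] assms(3) by (auto simp: right_AE1_def)
    then show "lin (\<lambda>mt. single (fst u, mt) 1) (kappa_mono (snd u))
        = (single (fst u, (snd u, (0, {}))) 1 :: _ \<Rightarrow>\<^sub>0 'k)"
      by (simp add: kappa_mono_def)
  qed
  also have "\<dots> = alphaT p (kappa_mono m)"
    using assms(3)
    by (simp add: kappa_mono_def alphaT_def alphaT_bas_def alphaE_def tau2_eq bilin_single_right
        mmul_one_right par_def)
  finally show ?thesis by (simp add: lead)
qed

lemma kappa_right_tbas_one_tau2:
  assumes "tfinite (e, r)" "snd r \<subseteq> {3..}"
  shows "kappa_right (tbas (e, r) ((0, {}), tau 2)) = (single (e, (r, tau 2)) 1 :: _ \<Rightarrow>\<^sub>0 'k::comm_ring_1)"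
proof -
  have "2 \<notin> snd r" using assms(2) by auto
  moreover have "inv_count (snd r) {2} = card (snd r)"
    using assms by (intro inv_count_singleton_below) (auto simp: tfinite_def)
  ultimately show ?thesis
    by (simp add: tbas_eq tdisjoint_def tmono_add_def mono_add_def tsign_def par_def tau2_eq
        kappa_right_single kappa_basis_def kappa_sign_def flip: power_add)
qed

lemma kappa_right_tbas_tau2_one:
  assumes "tfinite (e, r)" "snd r \<subseteq> {3..}"
  shows "kappa_right (tbas (e, r) (tau 2, (0, {})))
    = (sc ((- 1) ^ card (snd r)) (lin (\<lambda>e'. single (e', (r, (0, {}))) 1) (mmul e (tau 2)))
        :: _ \<Rightarrow>\<^sub>0 'k::comm_ring_1)"
proof -
  have "2 \<notin> snd r" using assms(2) by auto
  then show ?thesis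
    by (cases "2 \<in> snd e")
      (simp_all add: tbas_eq tdisjoint_def tmono_add_def mono_add_def tsign_def par_def tau2_eq
        mmul_eq kappa_right_single kappa_basis_def kappa_sign_def power_add)
qed

lemma lead_mono_tau2:
  assumes "p > 0" "mAE1 m" "2 \<in> snd m"
  shows "lead_mono p m = sc ((- 1) ^ card (snd m - {2}))
    (tmul (alpha_mono p (fst m, snd m - {2})) (tau_lead p 2) :: _ \<Rightarrow>\<^sub>0 'k::comm_ring_1)"
proof -
  let ?T = "snd m - {2}"
  have fin: "finite (snd m)" "snd m \<subseteq> {2..}" using assms(2) by (auto simp: mAE1_def)
  then have T3: "?T \<subseteq> {3..}" using subset_atLeast_3[of ?T] by auto
  have "Min (snd m) = 2" using fin assms(3) by (intro Min_eqI) auto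
  then have "sorted_list_of_set (snd m) = 2 # sorted_list_of_set ?T"
    using sorted_list_of_set_nonempty[of "snd m"] fin assms(3) by auto
  moreover have "tfinite_keys (single ((0, {}), (fst m, {})) 1 :: _ \<Rightarrow>\<^sub>0 'k)"
    by (simp add: tfinite_keys_def tfinite_def)
  moreover have "\<forall>n\<in>set (sorted_list_of_set ?T). n \<ge> 3" using fin T3 by auto
  ultimately have "lead_mono p m
      = sc ((- 1) ^ card ?T) (tmul (lead_mono p (fst m, ?T)) (tau_lead p 2) :: _ \<Rightarrow>\<^sub>0 'k)"
    using fin by (simp add: lead_mono_def foldl_tau_lead_tau2[OF assms(1)])
  also have "lead_mono p (fst m, ?T) = (alpha_mono p (fst m, ?T) :: _ \<Rightarrow>\<^sub>0 'k)"
    using fin by (intro lead_mono_eq_alpha_mono) auto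
  finally show ?thesis .
qed

lemma kappa_right_tmul_tau_lead_2:
  assumes "p > 0" "mAE1 m" "snd m \<subseteq> {3..}"
  shows "kappa_right (tmul (alpha_mono p m) (tau_lead p 2))
    = (alphaT_bas p (m, tau 2) :: _ \<Rightarrow>\<^sub>0 'k::comm_ring_1)"
proof -
  let ?Y = "alpha_mono p m :: _ \<Rightarrow>\<^sub>0 'k" and ?P = "tau_lead p 2 :: _ \<Rightarrow>\<^sub>0 'k"
  have "kappa_right (tmul ?Y ?P) = lin (\<lambda>u. kappa_right (lin (tbas u) ?P)) ?Y"
    by (simp add: tmul_eq_lin_left kappa_right_lin)
  also have "\<dots> = lin (\<lambda>u. lin (\<lambda>et. sc ((- 1) ^ (par (snd u) * par (fst et)))
      (lin (\<lambda>e. single (e, snd u, snd et) 1) (mmul (fst u) (fst et)))) ?P) ?Y"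
  proof (rule lin_cong)
    fix u assume "u \<in> keys ?Y"
    moreover have "right_AE1 (snd m) ?Y" by (rule right_AE1_alpha_mono[OF assms(1,2)])
    ultimately have "tfinite u" "snd (snd u) \<subseteq> snd m" unfolding right_AE1_def by blast+
    moreover obtain e r where er: "u = (e, r)" by (metis prod.exhaust)
    ultimately have r: "tfinite (e, r)" "snd r \<subseteq> {3..}" using assms(3) by auto
    show "kappa_right (lin (tbas u) ?P) = lin (\<lambda>et. sc ((- 1) ^ (par (snd u) * par (fst et)))
        (lin (\<lambda>e. single (e, snd u, snd et) 1) (mmul (fst u) (fst et)))) ?P"
      using kappa_right_tbas_one_tau2[OF r, where 'k = 'k] kappa_right_tbas_tau2_one[OF r, where 'k = 'k]
      by (simp add: er tau_lead_def lin_add kappa_right_add mmul_one_right par_def tau2_eq)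
  qed
  also have "\<dots> = alphaT_bas p (m, tau 2)"
    by (simp add: alphaT_bas_def alphaE_def tau_lead_def bilin_eq_lin_left)
  finally show ?thesis .
qed

lemma kappa_right_lead_mono_tau2:
  assumes "p > 0" "mAE1 m" "2 \<in> snd m"
  shows "kappa_right (lead_mono p m) = alphaT p (kappa_mono m :: _ \<Rightarrow>\<^sub>0 'k::comm_ring_1)"
proof -
  let ?m' = "(fst m, snd m - {2})"
  have m': "mAE1 ?m'" "snd ?m' \<subseteq> {3..}"
    using assms(2) subset_atLeast_3[of "snd ?m'"] by (auto simp: mAE1_def)
  have "inv_count (snd ?m') {2} = card (snd ?m')"
    using m' by (intro inv_count_singleton_below) (auto simp: mAE1_def)
  then have "kappa_mono m = single (?m', tau 2) ((- 1) ^ card (snd ?m') :: 'k)"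
    using assms(3) by (simp add: kappa_mono_def)
  then show ?thesis
    by (simp add: lead_mono_tau2[OF assms] kappa_right_tmul_tau_lead_2[OF assms(1) m']
        kappa_right_sc alphaT_def)
qed

lemma kappa_right_lead_mono:
  "p > 0 \<Longrightarrow> mAE1 m \<Longrightarrow> kappa_right (lead_mono p m) = alphaT p (kappa_mono m)"
  using kappa_right_lead_mono_tau2 kappa_right_lead_mono_no_tau2 by blast

lemma comp_single [simp]: "comp S (single (e, y) c) = (if e = (0, S) then single y c else 0)"
  by (simp add: comp_def)

lemma comp_diff: "comp S (X - Y) = comp S X - comp S Y"
  by (simp add: comp_def lin_diff)

lemma comp_sum: "comp S (sum g A) = (\<Sum>a\<in>A. comp S (g a))"
  by (simp add: comp_def lin_sum)

lemma keys_comp: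
  fixes W :: "(mono \<times> 'b) \<Rightarrow>\<^sub>0 'k::comm_ring_1"
  shows "keys (comp S W) \<subseteq> snd ` keys W"
proof
  fix y assume "y \<in> keys (comp S W)"
  with keys_lin[of "\<lambda>u. if fst u = (0, S) then single (snd u) 1 else 0" W]
  have "y \<in> (\<Union>u\<in>keys W. keys (if fst u = (0, S) then single (snd u) 1 else 0 :: _ \<Rightarrow>\<^sub>0 'k))"
    unfolding comp_def by (rule subsetD)
  then obtain u where "u \<in> keys W"
    "y \<in> keys (if fst u = (0, S) then single (snd u) 1 else 0 :: _ \<Rightarrow>\<^sub>0 'k)"
    by blast
  then show "y \<in> snd ` keys W" by (auto split: if_splits)
qed

lemma hpart_comp: "hpart p j (comp S W) = comp S (rpart p (p * j) W)"
  unfolding comp_def hpart_def rpart_def lin_lin by (rule lin_cong) auto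

lemma kappa_comp: "kappa (comp S W) = comp S (kappa_right W)"
  unfolding comp_def kappa_def kappa_right_def lin_lin
  by (rule lin_cong) (auto simp: kappa_mono_eq comp_def[symmetric])

lemma comp_zero [simp]: "comp S 0 = 0"
  by (simp add: comp_def)

lemma alpha_zero [simp]: "alpha p 0 = 0"
  by (simp add: alpha_def)

lemma alpha_diff: "alpha p (x - y) = alpha p x - alpha p y"
  by (simp add: alpha_def lin_diff)

lemma alphaT_sum: "alphaT p (sum g A) = (\<Sum>a\<in>A. alphaT p (g a))"
  by (simp add: alphaT_def lin_sum)

lemma filtered_comp_alpha:
  fixes x :: "mono \<Rightarrow>\<^sub>0 'k::comm_ring_1"
  assumes "p > 0" "filtered p j x"
  shows "filtered p j (comp S (alpha p x))"
  unfolding filtered_def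
proof
  fix y assume "y \<in> keys (comp S (alpha p x))"
  with keys_comp have "y \<in> snd ` keys (alpha p x)" by (rule subsetD)
  then obtain u where u: "u \<in> keys (alpha p x)" "y = snd u" by (rule imageE)
  have "u \<in> (\<Union>m\<in>keys x. keys (alpha_mono p m :: _ \<Rightarrow>\<^sub>0 'k))"
    using keys_lin[of "alpha_mono p" x] u(1) unfolding alpha_def by (rule subsetD)
  then obtain m where m: "m \<in> keys x" and ey: "u \<in> keys (alpha_mono p m :: _ \<Rightarrow>\<^sub>0 'k)"
    by blast
  have "mAE1 m" "p * j \<le> fwt p m" using assms(2) m by (auto simp: filtered_def)
  moreover have "fwt p m \<le> fwt p y"
    using rweight_ge_alpha_mono[OF assms(1) \<open>mAE1 m\<close>] ey u(2) unfolding rweight_ge_def by blast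
  moreover have "mAE1 y"
    using right_AE1_alpha_mono[OF assms(1) \<open>mAE1 m\<close>] ey u(2) unfolding right_AE1_def by blast
  ultimately show "mAE1 y \<and> p * j \<le> fwt p y" by auto
qed

lemma hpart_comp_alpha:
  assumes "p > 0" "filtered p j x"
  shows "hpart p j (comp S (alpha p x)) = hpart p j (comp S (alpha p (hpart p j x)))"
proof -
  have Suc_j: "filtered p (Suc j) (comp S (alpha p (x - hpart p j x)))"
    by (rule filtered_comp_alpha[OF assms(1) filtered_Suc_diff_hpart[OF assms]])
  moreover have "filtered p j (comp S (alpha p (x - hpart p j x)))"
    using Suc_j by (rule filtered_mono) simp
  ultimately have "hpart p j (comp S (alpha p (x - hpart p j x))) = 0"
    using filtered_Suc_iff[OF assms(1)] by blast
  then show ?thesis by (simp add: alpha_diff comp_diff hpart_diff)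
qed

lemma kappa_hpart_comp_alpha:
  fixes y :: "mono \<Rightarrow>\<^sub>0 'k::comm_ring_1"
  assumes "p > 0" "\<And>m. m \<in> keys y \<Longrightarrow> mAE1 m \<and> fwt p m = p * j"
  shows "kappa (hpart p j (comp S (alpha p y))) = comp S (alphaT p (kappa y))"
proof -
  have "kappa_right (rpart p (p * j) (alpha p y)) = lin (\<lambda>m. kappa_right (rpart p (p * j) (alpha_mono p m))) y"
    by (simp add: alpha_def rpart_def lin_lin kappa_right_lin)
  also have "\<dots> = lin (\<lambda>m. alphaT p (kappa_mono m)) y"
  proof (rule lin_cong)
    fix m assume "m \<in> keys y"
    then have m: "mAE1 m" "fwt p m = p * j" using assms(2) by auto
    then have "rpart p (p * j) (alpha_mono p m) = (lead_mono p m :: _ \<Rightarrow>\<^sub>0 'k)"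
      using rpart_alpha_mono[OF assms(1) m(1)] by simp
    then show "kappa_right (rpart p (p * j) (alpha_mono p m :: _ \<Rightarrow>\<^sub>0 'k)) = alphaT p (kappa_mono m)"
      using kappa_right_lead_mono[OF assms(1) m(1)] by simp
  qed
  also have "\<dots> = alphaT p (kappa y)"
    by (simp add: kappa_def alphaT_def lin_lin)
  finally show ?thesis by (simp add: hpart_comp kappa_comp)
qed

section \<open>The associated graded object\<close>

definition gr_part :: "nat \<Rightarrow> (nat \<Rightarrow> (mono \<Rightarrow>\<^sub>0 'k::comm_ring_1) set) \<Rightarrow> nat \<Rightarrow> (mono \<Rightarrow>\<^sub>0 'k)"
  where "gr_part p f j = hpart p j (rep (f j))"

lemma sum_triangle_eq_sum_square:
  fixes h :: "nat \<Rightarrow> nat \<Rightarrow> 'a::comm_monoid_add"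
  assumes "\<And>i k. N < i \<or> N < k \<Longrightarrow> h i k = 0"
  shows "(\<Sum>n\<le>2 * N. \<Sum>i\<le>n. h i (n - i)) = (\<Sum>i\<le>N. \<Sum>k\<le>N. h i k)"
proof -
  have "(\<Sum>n\<le>2 * N. \<Sum>i\<le>n. h i (n - i)) = (\<Sum>(i, k)\<in>{(i, k). i + k \<le> 2 * N}. h i k)"
    by (rule sum.triangle_reindex_eq[symmetric])
  also have "\<dots> = (\<Sum>(i, k)\<in>{..N} \<times> {..N}. h i k)"
  proof (rule sum.mono_neutral_right)
    show "finite {(i, k). i + k \<le> 2 * N}"
      by (rule finite_subset[of _ "{..2 * N} \<times> {..2 * N}"]) auto
    show "\<forall>x\<in>{(i, k). i + k \<le> 2 * N} - {..N} \<times> {..N}. (case x of (i, k) \<Rightarrow> h i k) = 0"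
      using assms by (auto simp: not_le[symmetric])
  qed auto
  also have "\<dots> = (\<Sum>i\<le>N. \<Sum>k\<le>N. h i k)" by (simp add: sum.cartesian_product)
  finally show ?thesis .
qed

context
  fixes p :: nat
  assumes p_pos: "p > 0"
begin

lemma rel_iff: "(x, y) \<in> rel p j \<longleftrightarrow> filtered p j x \<and> filtered p j y \<and> hpart p j x = hpart p j y"
proof -
  have "filtered p (Suc j) (x - y) \<longleftrightarrow> hpart p j x = hpart p j y" if "filtered p j x" "filtered p j y"
    using filtered_Suc_iff[OF p_pos filtered_diff[OF that]] by (simp add: hpart_diff)
  then show ?thesis by (auto simp: rel_def Fil_eq[OF p_pos])
qed

lemma cls_eq: "filtered p j x \<Longrightarrow> cls p j x = {y. filtered p j y \<and> hpart p j y = hpart p j x}"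
  by (auto simp: cls_def rel_iff)

lemma cls_eq_cls_iff:
  "filtered p j x \<Longrightarrow> filtered p j y \<Longrightarrow> cls p j x = cls p j y \<longleftrightarrow> hpart p j x = hpart p j y"
  by (auto simp: cls_eq set_eq_iff)

lemma rep_cls:
  assumes "filtered p j x"
  shows "filtered p j (rep (cls p j x))" "hpart p j (rep (cls p j x)) = hpart p j x"
proof -
  have "x \<in> cls p j x" using assms by (simp add: cls_eq)
  then have "rep (cls p j x) \<in> cls p j x" unfolding rep_def by (rule someI)
  then show "filtered p j (rep (cls p j x))" "hpart p j (rep (cls p j x)) = hpart p j x"
    using assms by (simp_all add: cls_eq)
qed

lemma E0_rep:
  assumes "f \<in> E0 p"
  shows "filtered p j (rep (f j))" "f j = cls p j (rep (f j))"
proof -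
  obtain x where x: "filtered p j x" "f j = cls p j x"
    using assms by (auto simp: E0_def Gr_def quotient_def Fil_eq[OF p_pos] cls_def)
  then show "filtered p j (rep (f j))" using rep_cls by simp
  show "f j = cls p j (rep (f j))"
    using x rep_cls[OF x(1)] cls_eq_cls_iff[OF x(1)] by simp
qed

lemma filtered_gr_part: "f \<in> E0 p \<Longrightarrow> filtered p j (gr_part p f j)"
  by (simp add: gr_part_def filtered_hpart E0_rep(1))

lemma keys_gr_part: "f \<in> E0 p \<Longrightarrow> m \<in> keys (gr_part p f j) \<Longrightarrow> mAE1 m \<and> fwt p m = p * j"
  using E0_rep(1)[of f j] by (auto simp: gr_part_def keys_hpart filtered_def)

lemma E0_component_eq_0_iff: "f \<in> E0 p \<Longrightarrow> f j = cls p j 0 \<longleftrightarrow> gr_part p f j = 0"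
  using E0_rep[of f j] cls_eq_cls_iff[of j "rep (f j)" 0] by (simp add: gr_part_def filtered_zero)

lemma finite_gr_support:
  assumes "f \<in> E0 p"
  shows "finite {j. gr_part p f j \<noteq> 0}"
proof -
  have "{j. gr_part p f j \<noteq> 0} = {j. f j \<noteq> cls p j 0}"
    by (simp add: E0_component_eq_0_iff[OF assms])
  moreover have "finite {j. f j \<noteq> cls p j 0}" using assms by (simp add: E0_def)
  ultimately show ?thesis by simp
qed

lemma E0_eqI:
  assumes "f \<in> E0 p" "g \<in> E0 p" "\<And>j. gr_part p f j = gr_part p g j"
  shows "f = g"
proof
  fix j
  show "f j = g j"
    using E0_rep[OF assms(1), of j] E0_rep[OF assms(2), of j] assms(3)[of j]
      cls_eq_cls_iff[of j "rep (f j)" "rep (g j)"]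
    by (simp add: gr_part_def)
qed

lemma cls_family_in_E0:
  assumes "\<And>j. filtered p j (F j)" "finite {j. hpart p j (F j) \<noteq> 0}"
  shows "(\<lambda>j. cls p j (F j)) \<in> E0 p"
proof -
  have "{j. cls p j (F j) \<noteq> cls p j 0} = {j. hpart p j (F j) \<noteq> 0}"
    using cls_eq_cls_iff[OF assms(1)] by (auto simp: filtered_zero)
  then show ?thesis
    using assms by (auto simp: E0_def Gr_def quotient_def Fil_eq[OF p_pos] cls_def)
qed

lemma gr_part_cls_family:
  assumes "\<And>j. filtered p j (F j)"
  shows "gr_part p (\<lambda>j. cls p j (F j)) j = hpart p j (F j)"
  by (simp add: gr_part_def rep_cls(2)[OF assms])

lemma E0kappa_eq:
  assumes "f \<in> E0 p" "finite J" "{j. gr_part p f j \<noteq> 0} \<subseteq> J"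
  shows "E0kappa p f = kappa (\<Sum>j\<in>J. gr_part p f j)"
proof -
  have "E0kappa p f = (\<Sum>j\<in>{j. gr_part p f j \<noteq> 0}. kappa (gr_part p f j))"
    unfolding E0kappa_def using E0_component_eq_0_iff[OF assms(1)]
    by (intro sum.cong) (auto simp: prj_kappa gr_part_def)
  also have "\<dots> = (\<Sum>j\<in>J. kappa (gr_part p f j))"
    using assms by (intro sum.mono_neutral_left) auto
  finally show ?thesis by (simp add: kappa_sum)
qed

lemma sum_gr_part_in_AE1:
  assumes "f \<in> E0 p"
  shows "(\<Sum>j\<in>J. gr_part p f j) \<in> AE1"
proof -
  have "filtered p 0 (\<Sum>j\<in>J. gr_part p f j)"
    by (intro filtered_sum filtered_mono[OF filtered_gr_part[OF assms]]) simp
  then show ?thesis by (simp add: filtered_0_iff)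
qed

lemma
  assumes "f \<in> E0 p" "g \<in> E0 p"
  shows E0add_in_E0: "E0add p f g \<in> E0 p"
    and gr_part_E0add: "gr_part p (E0add p f g) j = gr_part p f j + gr_part p g j"
proof -
  let ?F = "\<lambda>j. rep (f j) + rep (g j)"
  have F: "filtered p j (?F j)" for j
    using E0_rep(1)[OF assms(1)] E0_rep(1)[OF assms(2)] by (simp add: filtered_add)
  have hF: "hpart p j (?F j) = gr_part p f j + gr_part p g j" for j
    by (simp add: hpart_add gr_part_def)
  have "{j. hpart p j (?F j) \<noteq> 0} \<subseteq> {j. gr_part p f j \<noteq> 0} \<union> {j. gr_part p g j \<noteq> 0}"
    using hF by auto
  moreover have "finite ({j. gr_part p f j \<noteq> 0} \<union> {j. gr_part p g j \<noteq> 0})"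
    using finite_gr_support[OF assms(1)] finite_gr_support[OF assms(2)] by simp
  ultimately have "finite {j. hpart p j (?F j) \<noteq> 0}" by (rule finite_subset)
  with F show "E0add p f g \<in> E0 p" "gr_part p (E0add p f g) j = gr_part p f j + gr_part p g j"
    unfolding E0add_def by (simp_all add: cls_family_in_E0 gr_part_cls_family hF)
qed

lemma
  assumes "f \<in> E0 p"
  shows E0smul_in_E0: "E0smul p c f \<in> E0 p"
    and gr_part_E0smul: "gr_part p (E0smul p c f) j = sc c (gr_part p f j)"
proof -
  let ?F = "\<lambda>j. sc c (rep (f j))"
  have F: "filtered p j (?F j)" for j using E0_rep(1)[OF assms] by (simp add: filtered_sc)
  have hF: "hpart p j (?F j) = sc c (gr_part p f j)" for j by (simp add: hpart_sc gr_part_def)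
  have "{j. hpart p j (?F j) \<noteq> 0} \<subseteq> {j. gr_part p f j \<noteq> 0}" using hF by auto
  then have "finite {j. hpart p j (?F j) \<noteq> 0}"
    using finite_gr_support[OF assms] by (rule finite_subset)
  with F show "E0smul p c f \<in> E0 p" "gr_part p (E0smul p c f) j = sc c (gr_part p f j)"
    unfolding E0smul_def by (simp_all add: cls_family_in_E0 gr_part_cls_family hF)
qed

lemma
  assumes "f \<in> E0 p" "g \<in> E0 p"
  shows E0mul_in_E0: "E0mul p f g \<in> E0 p"
    and gr_part_E0mul: "gr_part p (E0mul p f g) n = (\<Sum>i\<le>n. vmul (gr_part p f i) (gr_part p g (n - i)))"
proof -
  let ?F = "\<lambda>n. \<Sum>i\<le>n. vmul (rep (f i)) (rep (g (n - i)))"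
  have F: "filtered p n (?F n)" for n
  proof (intro filtered_sum)
    fix i assume "i \<in> {..n}"
    then show "filtered p n (vmul (rep (f i)) (rep (g (n - i))))"
      using filtered_vmul[OF E0_rep(1)[OF assms(1)] E0_rep(1)[OF assms(2)], of i "n - i"] by simp
  qed
  have hF: "hpart p n (?F n) = (\<Sum>i\<le>n. vmul (gr_part p f i) (gr_part p g (n - i)))" for n
    unfolding hpart_sum gr_part_def
  proof (intro sum.cong refl)
    fix i assume "i \<in> {..n}"
    then show "hpart p n (vmul (rep (f i)) (rep (g (n - i))))
        = vmul (hpart p i (rep (f i))) (hpart p (n - i) (rep (g (n - i))))"
      using hpart_vmul[OF E0_rep(1)[OF assms(1)] E0_rep(1)[OF assms(2)], of i "n - i"] by simp
  qed
  have "{n. hpart p n (?F n) \<noteq> 0}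
      \<subseteq> (\<lambda>(i, k). i + k) ` ({j. gr_part p f j \<noteq> 0} \<times> {j. gr_part p g j \<noteq> 0})"
  proof
    fix n assume "n \<in> {n. hpart p n (?F n) \<noteq> 0}"
    then obtain i where "i \<le> n" "vmul (gr_part p f i) (gr_part p g (n - i)) \<noteq> 0"
      unfolding hF by (auto intro: sum.not_neutral_contains_not_neutral)
    then show "n \<in> (\<lambda>(i, k). i + k) ` ({j. gr_part p f j \<noteq> 0} \<times> {j. gr_part p g j \<noteq> 0})"
      by (intro image_eqI[of _ _ "(i, n - i)"]) (auto simp: vmul_def)
  qed
  moreover have "finite ((\<lambda>(i, k). i + k) ` ({j. gr_part p f j \<noteq> 0} \<times> {j. gr_part p g j \<noteq> 0}))"
    using finite_gr_support[OF assms(1)] finite_gr_support[OF assms(2)] by simp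
  ultimately have "finite {n. hpart p n (?F n) \<noteq> 0}" by (rule finite_subset)
  with F show "E0mul p f g \<in> E0 p"
    "gr_part p (E0mul p f g) n = (\<Sum>i\<le>n. vmul (gr_part p f i) (gr_part p g (n - i)))"
    unfolding E0mul_def by (simp_all add: cls_family_in_E0 gr_part_cls_family hF)
qed

lemma filtered_vone: "filtered p j (if j = 0 then vone else 0)"
  by (auto simp: vone_def filtered_def)

lemma hpart_vone: "hpart p j (if j = 0 then vone else 0) = (if j = 0 then vone else 0)"
  by (rule poly_mapping_eqI) (auto simp: lookup_hpart vone_def lookup_single when_def)

lemma E0one_in_E0: "E0one p \<in> E0 p"
  unfolding E0one_def
  by (rule cls_family_in_E0[OF filtered_vone]) (rule finite_subset[of _ "{0}"], auto simp: hpart_vone)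

lemma gr_part_E0one: "gr_part p (E0one p) j = (if j = 0 then vone else 0)"
  unfolding E0one_def by (simp only: gr_part_cls_family[OF filtered_vone] hpart_vone)

lemma
  assumes "f \<in> E0 p"
  shows E0coact_in_E0: "E0coact p f S \<in> E0 p"
    and gr_part_E0coact: "gr_part p (E0coact p f S) j = hpart p j (comp S (alpha p (gr_part p f j)))"
proof -
  let ?F = "\<lambda>j. comp S (alpha p (rep (f j)))"
  have F: "filtered p j (?F j)" for j by (rule filtered_comp_alpha[OF p_pos E0_rep(1)[OF assms]])
  have hF: "hpart p j (?F j) = hpart p j (comp S (alpha p (gr_part p f j)))" for j
    unfolding gr_part_def by (rule hpart_comp_alpha[OF p_pos E0_rep(1)[OF assms]])
  have "{j. hpart p j (?F j) \<noteq> 0} \<subseteq> {j. gr_part p f j \<noteq> 0}" using hF by auto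
  then have "finite {j. hpart p j (?F j) \<noteq> 0}"
    using finite_gr_support[OF assms] by (rule finite_subset)
  with F show "E0coact p f S \<in> E0 p"
    "gr_part p (E0coact p f S) j = hpart p j (comp S (alpha p (gr_part p f j)))"
    unfolding E0coact_def by (simp_all add: cls_family_in_E0 gr_part_cls_family hF)
qed

lemma E0kappa_E0add:
  assumes "f \<in> E0 p" "g \<in> E0 p"
  shows "E0kappa p (E0add p f g) = E0kappa p f + E0kappa p g"
proof -
  let ?J = "{j. gr_part p f j \<noteq> 0} \<union> {j. gr_part p g j \<noteq> 0}"
  have J: "finite ?J" using finite_gr_support[OF assms(1)] finite_gr_support[OF assms(2)] by simp
  have "E0kappa p (E0add p f g) = kappa (\<Sum>j\<in>?J. gr_part p (E0add p f g) j)"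
    by (rule E0kappa_eq[OF E0add_in_E0[OF assms] J]) (auto simp: gr_part_E0add[OF assms])
  also have "\<dots> = kappa (\<Sum>j\<in>?J. gr_part p f j + gr_part p g j)"
    by (simp add: gr_part_E0add[OF assms])
  also have "\<dots> = E0kappa p f + E0kappa p g"
    using E0kappa_eq[OF assms(1) J] E0kappa_eq[OF assms(2) J] by (auto simp: sum.distrib kappa_add)
  finally show ?thesis .
qed

lemma E0kappa_E0smul:
  assumes "f \<in> E0 p"
  shows "E0kappa p (E0smul p c f) = sc c (E0kappa p f)"
proof -
  let ?J = "{j. gr_part p f j \<noteq> 0}"
  have J: "finite ?J" by (rule finite_gr_support[OF assms])
  have "E0kappa p (E0smul p c f) = kappa (\<Sum>j\<in>?J. gr_part p (E0smul p c f) j)"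
    by (rule E0kappa_eq[OF E0smul_in_E0[OF assms] J]) (auto simp: gr_part_E0smul[OF assms])
  also have "\<dots> = kappa (\<Sum>j\<in>?J. sc c (gr_part p f j))"
    by (simp add: gr_part_E0smul[OF assms])
  also have "\<dots> = sc c (E0kappa p f)"
    using E0kappa_eq[OF assms J] by (simp add: sc_sum[symmetric] kappa_sc)
  finally show ?thesis .
qed

lemma E0kappa_E0mul:
  assumes "f \<in> E0 p" "g \<in> E0 p"
  shows "E0kappa p (E0mul p f g) = tmul (E0kappa p f) (E0kappa p g)"
proof -
  have "finite ({j. gr_part p f j \<noteq> 0} \<union> {j. gr_part p g j \<noteq> 0})"
    using finite_gr_support[OF assms(1)] finite_gr_support[OF assms(2)] by simp
  then obtain N where "\<forall>j\<in>{j. gr_part p f j \<noteq> 0} \<union> {j. gr_part p g j \<noteq> 0}. j \<le> N"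
    using finite_nat_set_iff_bounded_le by blast
  then have supp: "{j. gr_part p f j \<noteq> 0} \<subseteq> {..N}" "{j. gr_part p g j \<noteq> 0} \<subseteq> {..N}"
    by auto
  let ?h = "\<lambda>i k. vmul (gr_part p f i) (gr_part p g k)"
  have "gr_part p f i = 0" "gr_part p g i = 0" if "N < i" for i
    using supp that not_le by blast+
  then have h: "?h i k = 0" if "N < i \<or> N < k" for i k
    using that by (auto simp: vmul_def)
  have "{n. gr_part p (E0mul p f g) n \<noteq> 0} \<subseteq> {..2 * N}"
  proof
    fix n assume "n \<in> {n. gr_part p (E0mul p f g) n \<noteq> 0}"
    then obtain i where i: "i \<le> n" "?h i (n - i) \<noteq> 0"
      by (auto simp: gr_part_E0mul[OF assms] intro: sum.not_neutral_contains_not_neutral)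
    then have "i \<le> N" "n - i \<le> N" using h not_le by blast+
    with i(1) show "n \<in> {..2 * N}" by simp
  qed
  then have "E0kappa p (E0mul p f g) = kappa (\<Sum>n\<le>2 * N. gr_part p (E0mul p f g) n)"
    by (intro E0kappa_eq[OF E0mul_in_E0[OF assms]]) simp_all
  also have "\<dots> = kappa (\<Sum>n\<le>2 * N. \<Sum>i\<le>n. ?h i (n - i))"
    by (simp add: gr_part_E0mul[OF assms])
  also have "(\<Sum>n\<le>2 * N. \<Sum>i\<le>n. ?h i (n - i)) = (\<Sum>i\<le>N. \<Sum>k\<le>N. ?h i k)"
    using h by (rule sum_triangle_eq_sum_square)
  also have "\<dots> = vmul (\<Sum>i\<le>N. gr_part p f i) (\<Sum>k\<le>N. gr_part p g k)"
    by (simp add: vmul_def bilin_sum_left bilin_sum_right) (rule sum.swap)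
  also have "kappa \<dots> = tmul (kappa (\<Sum>i\<le>N. gr_part p f i)) (kappa (\<Sum>k\<le>N. gr_part p g k))"
    by (rule kappa_vmul[OF sum_gr_part_in_AE1[OF assms(1)] sum_gr_part_in_AE1[OF assms(2)]])
  also have "\<dots> = tmul (E0kappa p f) (E0kappa p g)"
    by (simp add: E0kappa_eq[OF assms(1) _ supp(1)] E0kappa_eq[OF assms(2) _ supp(2)])
  finally show ?thesis .
qed

lemma E0kappa_E0one: "E0kappa p (E0one p) = TTone"
proof -
  have "E0kappa p (E0one p) = kappa (\<Sum>j\<in>{0}. gr_part p (E0one p) j)"
    by (rule E0kappa_eq[OF E0one_in_E0]) (auto simp: gr_part_E0one)
  then show ?thesis
    by (simp add: gr_part_E0one vone_def TTone_def kappa_def kappa_mono_def)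
qed

lemma E0kappa_E0coact:
  assumes "f \<in> E0 p"
  shows "comp S (alphaT p (E0kappa p f)) = E0kappa p (E0coact p f S)"
proof -
  let ?J = "{j. gr_part p f j \<noteq> 0}"
  have J: "finite ?J" by (rule finite_gr_support[OF assms])
  have "comp S (alphaT p (E0kappa p f)) = (\<Sum>j\<in>?J. comp S (alphaT p (kappa (gr_part p f j))))"
    by (simp add: E0kappa_eq[OF assms J] kappa_sum alphaT_sum comp_sum)
  also have "\<dots> = (\<Sum>j\<in>?J. kappa (gr_part p (E0coact p f S) j))"
  proof (rule sum.cong[OF refl])
    fix j
    have "kappa (hpart p j (comp S (alpha p (gr_part p f j)))) = comp S (alphaT p (kappa (gr_part p f j)))"
      by (rule kappa_hpart_comp_alpha[OF p_pos]) (rule keys_gr_part[OF assms])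
    then show "comp S (alphaT p (kappa (gr_part p f j))) = kappa (gr_part p (E0coact p f S) j)"
      by (simp add: gr_part_E0coact[OF assms])
  qed
  also have "\<dots> = kappa (\<Sum>j\<in>?J. gr_part p (E0coact p f S) j)"
    by (simp add: kappa_sum)
  also have "\<dots> = E0kappa p (E0coact p f S)"
    by (rule E0kappa_eq[OF E0coact_in_E0[OF assms] J, symmetric]) (auto simp: gr_part_E0coact[OF assms])
  finally show ?thesis .
qed

lemma hpart_sum_gr_part:
  assumes "f \<in> E0 p" "finite J" "{j. gr_part p f j \<noteq> 0} \<subseteq> J"
  shows "hpart p i (\<Sum>j\<in>J. gr_part p f j) = gr_part p f i"
  using assms by (auto simp: hpart_sum gr_part_def hpart_hpart[OF p_pos] sum.delta)

lemma inj_on_E0kappa: "inj_on (E0kappa p) (E0 p)"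
proof (rule inj_onI)
  fix f g assume f: "f \<in> E0 p" and g: "g \<in> E0 p" and eq: "E0kappa p f = E0kappa p g"
  let ?J = "{j. gr_part p f j \<noteq> 0} \<union> {j. gr_part p g j \<noteq> 0}"
  have J: "finite ?J" using finite_gr_support[OF f] finite_gr_support[OF g] by simp
  have "(\<Sum>j\<in>?J. gr_part p f j) = (\<Sum>j\<in>?J. gr_part p g j)"
    using eq E0kappa_eq[OF f J] E0kappa_eq[OF g J] inj_kappa by (auto dest: injD)
  then show "f = g"
    using hpart_sum_gr_part[OF f J] hpart_sum_gr_part[OF g J] by (intro E0_eqI[OF f g]) force
qed

lemma E0kappa_in_TT: "f \<in> E0 p \<Longrightarrow> E0kappa p f \<in> TT"
  by (simp add: E0kappa_eq[OF _ finite_gr_support] kappa_in_TT sum_gr_part_in_AE1)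

lemma TT_subset_E0kappa_image: "TT \<subseteq> E0kappa p ` E0 p"
proof
  fix y assume "y \<in> TT"
  then obtain x where x: "x \<in> AE1" "kappa x = y" by (rule kappa_onto_TT)
  let ?g = "\<lambda>j. cls p j (hpart p j x)"
  let ?J = "(\<lambda>m. fwt p m div p) ` keys x"
  have F: "filtered p j (hpart p j x)" for j
    using x(1) by (auto simp: filtered_def keys_hpart AE1_def)
  have gr: "gr_part p ?g j = hpart p j x" for j
    by (simp add: gr_part_cls_family[OF F] hpart_hpart[OF p_pos])
  have J: "{j. hpart p j x \<noteq> 0} \<subseteq> ?J"
  proof
    fix j assume "j \<in> {j. hpart p j x \<noteq> 0}"
    then have "keys (hpart p j x) \<noteq> {}" by simp
    then obtain m where "m \<in> keys x" "fwt p m = p * j" by (auto simp: keys_hpart)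
    then show "j \<in> ?J" using p_pos by (intro image_eqI[of _ _ m]) auto
  qed
  then have "finite {j. hpart p j x \<noteq> 0}" by (rule finite_subset) simp
  then have g: "?g \<in> E0 p"
    by (intro cls_family_in_E0 F) (simp add: hpart_hpart[OF p_pos])
  have "E0kappa p ?g = kappa (\<Sum>j\<in>?J. hpart p j x)"
    using E0kappa_eq[OF g, of ?J] J by (simp add: gr)
  also have "(\<Sum>j\<in>?J. hpart p j x) = x"
  proof (rule sum_hpart[OF p_pos])
    fix m assume "m \<in> keys x"
    then have "p dvd fwt p m" using x(1) dvd_fwt by (auto simp: AE1_def)
    then have "fwt p m = p * (fwt p m div p)" by simp
    with \<open>m \<in> keys x\<close> show "\<exists>j\<in>?J. fwt p m = p * j" by blast
  qed simp
  finally have "E0kappa p ?g = y" using x(2) by simp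
  with g show "y \<in> E0kappa p ` E0 p" by blast
qed

lemma bij_betw_E0kappa: "bij_betw (E0kappa p) (E0 p) TT"
  using inj_on_E0kappa E0kappa_in_TT TT_subset_E0kappa_image by (auto simp: bij_betw_def)

end

theorem mainTheorem16:
  fixes p :: nat
  assumes "prime p" and "odd p" and "card (UNIV :: 'k::{field,finite} set) = p"
  shows "bij_betw (E0kappa p) (E0 p :: (nat \<Rightarrow> (mono \<Rightarrow>\<^sub>0 'k) set) set) TT
    \<and> E0one p \<in> (E0 p :: (nat \<Rightarrow> (mono \<Rightarrow>\<^sub>0 'k) set) set)
    \<and> (\<forall>f\<in>(E0 p :: (nat \<Rightarrow> (mono \<Rightarrow>\<^sub>0 'k) set) set). \<forall>g\<in>E0 p.
         E0add p f g \<in> E0 p \<and> E0mul p f g \<in> E0 p)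
    \<and> (\<forall>c::'k. \<forall>f\<in>E0 p. E0smul p c f \<in> E0 p)
    \<and> (\<forall>f\<in>(E0 p :: (nat \<Rightarrow> (mono \<Rightarrow>\<^sub>0 'k) set) set). \<forall>S\<subseteq>{0,1,2}. E0coact p f S \<in> E0 p)
    \<and> (\<forall>f\<in>(E0 p :: (nat \<Rightarrow> (mono \<Rightarrow>\<^sub>0 'k) set) set). \<forall>g\<in>E0 p.
         E0kappa p (E0add p f g) = E0kappa p f + E0kappa p g)
    \<and> (\<forall>c::'k. \<forall>f\<in>E0 p. E0kappa p (E0smul p c f) = sc c (E0kappa p f))
    \<and> (\<forall>f\<in>(E0 p :: (nat \<Rightarrow> (mono \<Rightarrow>\<^sub>0 'k) set) set). \<forall>g\<in>E0 p.
         E0kappa p (E0mul p f g) = tmul (E0kappa p f) (E0kappa p g))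
    \<and> E0kappa p (E0one p :: nat \<Rightarrow> (mono \<Rightarrow>\<^sub>0 'k) set) = TTone
    \<and> (\<forall>f\<in>(E0 p :: (nat \<Rightarrow> (mono \<Rightarrow>\<^sub>0 'k) set) set). \<forall>S\<subseteq>{0,1,2}.
         comp S (alphaT p (E0kappa p f)) = E0kappa p (E0coact p f S))"
proof -
  have "p > 0" using assms(1) by (simp add: prime_gt_0_nat)
  then show ?thesis
    by (simp add: bij_betw_E0kappa E0one_in_E0 E0add_in_E0 E0mul_in_E0 E0smul_in_E0 E0coact_in_E0
        E0kappa_E0add E0kappa_E0smul E0kappa_E0mul E0kappa_E0one E0kappa_E0coact)
qed

end
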